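(* In the structured linear setting described in the context, suppose the equal allocation sampling strategy is used, Assumptions A and B hold, $\delta>0$, and $\mathcal A(\mathbf{x})=\mathcal A$ for all $\mathbf{x}\in\mathcal X$, with $k=|\mathcal A|$. Let $T_{\mathrm I}=\mathbb E[\tau^{\mathrm I,L}_{\alpha,\delta}]$ and $T_{\mathrm{II}}=\mathbb E[\tau^{\mathrm{II},L}_{\alpha,\delta}]$. Then, as $k\to\infty$, $T_{\mathrm I}=\mathcal O(k\log k)$ and $T_{\mathrm{II}}=\mathcal O(k\log k)$; and as $\alpha\to0$, $T_{\mathrm I}=\mathcal O(\log(1/\alpha))$ and $T_{\mathrm{II}}=\mathcal O(\log(1/\alpha))$.
   Context: Linear setting: finite action set $\mathcal A$ ($k$ actions), finite context set $\mathcal X\subset\mathbb R^d$ with $m$ contexts and known probabilities $p(\mathbf{x})>0$; known feature map $\mathbf f:\mathcal X\to\mathbb R^d$; mean performance $y(\mathbf{x},a)=\mathbf f(\mathbf{x})^{\mathrm T}\bm\beta(a)$ with unknown $\bm\beta(a)\in\mathbb R^d$; observations $Y_t=\mathbf f(\mathbf{X}_t)^{\mathrm T}\bm\beta(A_t)+\varepsilon_t$ with independent noises, conditionally $\mathcal N(0,\sigma^2(A_t))$, unknown $\sigma^2(a)>0$. Statistics: $N_t(a)$ samples of action $a$ up to $t$; $D_t(a)=\sum_{s\le t,A_s=a}\mathbf f(\mathbf{X}_s)\mathbf f(\mathbf{X}_s)^{\mathrm T}$; OLS $\hat{\bm\beta}_t(a)$; residual variance $S_t^2(a)=\frac1{N_t(a)-d}\sum_{s\le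 t,A_s=a}(Y_s-\mathbf f(\mathbf{X}_s)^{\mathrm T}\hat{\bm\beta}_t(a))^2$; $\Sigma_t(\mathbf{x},a)=\mathbf f(\mathbf{x})^{\mathrm T}D_t(a)^{-1}\mathbf f(\mathbf{x})$; $\hat\pi_t(\mathbf{x})\in\arg\max_a\mathbf f(\mathbf{x})^{\mathrm T}\hat{\bm\beta}_t(a)$; $t_0=\inf\{t:D_t(a)\succ0\ \forall a\}$; $\tilde Z^L_{a,a'}(\mathbf{x},t,\delta)=\frac{(\mathbf f(\mathbf{x})^{\mathrm T}\hat{\bm\beta}_t(a)-\mathbf f(\mathbf{x})^{\mathrm T}\hat{\bm\beta}_t(a')+\delta)^2}{2(S_t^2(a)\Sigma_t(\mathbf{x},a)+S_t^2(a')\Sigma_t(\mathbf{x},a'))}$. For fixed $\epsilon>0$, $\gamma^L(t_1,t_2,\alpha)=\frac{(t_1-d)t_2}{\max\{(\frac{\alpha^2}{t_2+1})^{1/(t_1-d+1)}(t_2+1)-1,\epsilon\}}-(t_1-d)$. For $r\in\{\mathrm I,\mathrm{II}\}$, $\alpha^{\mathrm I}(\mathbf{x})=\frac{\alpha}{(k-1)mp(\mathbf{x})}$, $\alpha^{\mathrm{II}}(\mathbf{x})=\frac{\alpha}{(k-1)m}$ and $\varphi^{r,L}_{a,a'}(\bm N_t,\alpha,\mathbf{x})=\max\{\frac12\gamma^L(N_t(a),\Sigma_t^{-1}(\mathbf{x},a),\alpha^{r}(\mathbf{x})(\Sigma_t^{-1}(\mathbf{x},a')+1)^{-1/2}),\frac12\gamma^L(N_t(a'),\Sigma_t^{-1}(\mathbf{x},a'),\alpha^{r}(\mathbf{x})(\Sigma_t^{-1}(\mathbf{x},a)+1)^{-1/2})\}$.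 Stopping rules: $\tau^{\mathrm I,L}_{\alpha,\delta}=\inf\{t\ge t_0:\forall\mathbf{x},\forall a\ne\hat\pi_t(\mathbf{x}),\ \tilde Z^L_{\hat\pi_t(\mathbf{x}),a}(\mathbf{x},t,\delta)>\varphi^{\mathrm I,L}_{\hat\pi_t(\mathbf{x}),a}(\bm N_t,\alpha,\mathbf{x})\}$; with $w^L_{a,a'}(\mathbf{x},t)=[\sqrt{2\varphi^{\mathrm{II},L}_{a,a'}(\bm N_t,\alpha,\mathbf{x})(S_t^2(a)\Sigma_t(\mathbf{x},a)+S_t^2(a')\Sigma_t(\mathbf{x},a'))}-(\mathbf f(\mathbf{x})^{\mathrm T}\hat{\bm\beta}_t(a)-\mathbf f(\mathbf{x})^{\mathrm T}\hat{\bm\beta}_t(a'))]_+$ and $r^L(\mathbf{x},t)=\max_{a\ne\hat\pi_t(\mathbf{x})}w^L_{\hat\pi_t(\mathbf{x}),a}(\mathbf{x},t)$, $\tau^{\mathrm{II},L}_{\alpha,\delta}=\inf\{t\ge t_0:\sum_{\mathbf{x}}p(\mathbf{x})r^L(\mathbf{x},t)\le\delta\}$. Equal allocation: samples are allocated uniformly across actions, so that $N_t(a)=t/k$ for all $a\in\mathcal A$; the sampled context at each stage follows a distribution $P^s$. Assumption A: $\Sigma:=\mathbb E_{\mathbf{X}\sim P^s}[\mathbf f(\mathbf{X})\mathbf f(\mathbf{X})^{\mathrm T}]$ is positive definite and $\mathbf f(\mathbf{x})\ne0$ for all $\mathbf{x}\in\mathcal X$. Assumption B: there exist constants $0<L\le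 U<\infty$ with $L\le\|\mathbf f(\mathbf{x})\|_2^2\le U$ for all $\mathbf{x}\in\mathcal X$. *)

theory Defs
  imports "HOL-Analysis.Analysis" "HOL-Probability.Probability"
begin

text \<open>Actions are indexed by 0..<k. Contexts are vectors in
  real^'d (d = CARD('d)); the feature map is f. Samples are indexed by s = 0,1,2,...;
  the statistics at "time t" use the t samples s < t. Equal allocation: round robin,
  A_s = s mod k.\<close>

definition act :: "nat \<Rightarrow> nat \<Rightarrow> nat" where
  "act k s = s mod k"

definition samp :: "nat \<Rightarrow> nat \<Rightarrow> nat \<Rightarrow> nat set" where
  "samp k t a = {s. s < t \<and> act k s = a}"

definition Nt :: "nat \<Rightarrow> nat \<Rightarrow> nat \<Rightarrow> nat" where
  "Nt k t a = card (samp k t a)"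

definition outer :: "real^'d \<Rightarrow> real^'d^'d" where
  "outer v = (\<chi> i j. v$i * v$j)"

definition posdef :: "real^'d^'d \<Rightarrow> bool" where
  "posdef A \<longleftrightarrow> (\<forall>v. v \<noteq> 0 \<longrightarrow> v \<bullet> (A *v v) > 0)"

text \<open>Observation Y_s = f(X_s)^T beta(A_s) + eps_s with eps_s = sigma(A_s) Z_s, Z_s standard normal.\<close>
definition obsY :: "('c \<Rightarrow> real^'d) \<Rightarrow> (nat \<Rightarrow> real^'d) \<Rightarrow> (nat \<Rightarrow> real) \<Rightarrow> nat
    \<Rightarrow> (nat \<Rightarrow> 'c) \<Rightarrow> (nat \<Rightarrow> real) \<Rightarrow> nat \<Rightarrow> real" where
  "obsY f \<beta> \<sigma>2 k X Z s = f (X s) \<bullet> \<beta> (act k s) + sqrt (\<sigma>2 (act k s)) * Z s"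

definition Dt :: "('c \<Rightarrow> real^'d) \<Rightarrow> nat \<Rightarrow> (nat \<Rightarrow> 'c) \<Rightarrow> nat \<Rightarrow> nat \<Rightarrow> real^'d^'d" where
  "Dt f k X t a = (\<Sum>s\<in>samp k t a. outer (f (X s)))"

definition betahat :: "('c \<Rightarrow> real^'d) \<Rightarrow> nat \<Rightarrow> (nat \<Rightarrow> 'c) \<Rightarrow> (nat \<Rightarrow> real) \<Rightarrow> nat \<Rightarrow> nat \<Rightarrow> real^'d" where
  "betahat f k X Y t a = matrix_inv (Dt f k X t a) *v (\<Sum>s\<in>samp k t a. Y s *\<^sub>R f (X s))"

definition S2 :: "('c \<Rightarrow> real^'d) \<Rightarrow> nat \<Rightarrow> (nat \<Rightarrow> 'c) \<Rightarrow> (nat \<Rightarrow> real) \<Rightarrow> nat \<Rightarrow> nat \<Rightarrow> real" where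
  "S2 f k X Y t a = (\<Sum>s\<in>samp k t a. (Y s - f (X s) \<bullet> betahat f k X Y t a)\<^sup>2)
                      / (real (Nt k t a) - real CARD('d))"

definition Sig :: "('c \<Rightarrow> real^'d) \<Rightarrow> nat \<Rightarrow> (nat \<Rightarrow> 'c) \<Rightarrow> nat \<Rightarrow> 'c \<Rightarrow> nat \<Rightarrow> real" where
  "Sig f k X t x a = f x \<bullet> (matrix_inv (Dt f k X t a) *v f x)"

definition pihat :: "('c \<Rightarrow> real^'d) \<Rightarrow> nat \<Rightarrow> (nat \<Rightarrow> 'c) \<Rightarrow> (nat \<Rightarrow> real) \<Rightarrow> nat \<Rightarrow> 'c \<Rightarrow> nat" where
  "pihat f k X Y t x = (SOME a. a < k \<and> (\<forall>b<k. f x \<bullet> betahat f k X Y t b \<le> f x \<bullet> betahat f k X Y t a))"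

definition gammaL :: "real \<Rightarrow> real \<Rightarrow> real \<Rightarrow> real \<Rightarrow> real \<Rightarrow> real" where
  "gammaL eps d t1 t2 al =
     (t1 - d) * t2 / max ((al\<^sup>2 / (t2 + 1)) powr (1 / (t1 - d + 1)) * (t2 + 1) - 1) eps - (t1 - d)"

definition phiL :: "real \<Rightarrow> ('c \<Rightarrow> real^'d) \<Rightarrow> nat \<Rightarrow> (nat \<Rightarrow> 'c) \<Rightarrow> nat \<Rightarrow> real \<Rightarrow> 'c \<Rightarrow> nat \<Rightarrow> nat \<Rightarrow> real" where
  "phiL eps f k X t ar x a a' =
     max (1/2 * gammaL eps (real CARD('d)) (real (Nt k t a)) (1 / Sig f k X t x a)
                 (ar * (1 / Sig f k X t x a' + 1) powr (-1/2)))
         (1/2 * gammaL eps (real CARD('d)) (real (Nt k t a')) (1 / Sig f k X t x a')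
                 (ar * (1 / Sig f k X t x a + 1) powr (-1/2)))"

definition Ztil :: "('c \<Rightarrow> real^'d) \<Rightarrow> nat \<Rightarrow> (nat \<Rightarrow> 'c) \<Rightarrow> (nat \<Rightarrow> real) \<Rightarrow> 'c \<Rightarrow> nat \<Rightarrow> real \<Rightarrow> nat \<Rightarrow> nat \<Rightarrow> real" where
  "Ztil f k X Y x t \<delta> a a' =
     (f x \<bullet> betahat f k X Y t a - f x \<bullet> betahat f k X Y t a' + \<delta>)\<^sup>2
     / (2 * (S2 f k X Y t a * Sig f k X t x a + S2 f k X Y t a' * Sig f k X t x a'))"

definition alphaI :: "real \<Rightarrow> nat \<Rightarrow> nat \<Rightarrow> ('c \<Rightarrow> real) \<Rightarrow> 'c \<Rightarrow> real" where
  "alphaI \<alpha> k m p x = \<alpha> / (real (k - 1) * real m * p x)"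

definition alphaII :: "real \<Rightarrow> nat \<Rightarrow> nat \<Rightarrow> real" where
  "alphaII \<alpha> k m = \<alpha> / (real (k - 1) * real m)"

text \<open>t_0 = inf{t : D_t(a) positive definite for all a} (infinite if never).\<close>
definition t0 :: "('c \<Rightarrow> real^'d) \<Rightarrow> nat \<Rightarrow> (nat \<Rightarrow> 'c) \<Rightarrow> enat" where
  "t0 f k X = (INF t\<in>{t. \<forall>a<k. posdef (Dt f k X t a)}. enat t)"

definition stopI :: "real \<Rightarrow> ('c \<Rightarrow> real^'d) \<Rightarrow> 'c set \<Rightarrow> ('c \<Rightarrow> real) \<Rightarrow> real \<Rightarrow> real \<Rightarrow> nat
     \<Rightarrow> (nat \<Rightarrow> 'c) \<Rightarrow> (nat \<Rightarrow> real) \<Rightarrow> nat \<Rightarrow> bool" where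
  "stopI eps f Xs p \<alpha> \<delta> k X Y t \<longleftrightarrow>
     (\<forall>x\<in>Xs. \<forall>a<k. a \<noteq> pihat f k X Y t x \<longrightarrow>
        Ztil f k X Y x t \<delta> (pihat f k X Y t x) a
          > phiL eps f k X t (alphaI \<alpha> k (card Xs) p x) x (pihat f k X Y t x) a)"

definition wL :: "real \<Rightarrow> ('c \<Rightarrow> real^'d) \<Rightarrow> 'c set \<Rightarrow> real \<Rightarrow> nat
     \<Rightarrow> (nat \<Rightarrow> 'c) \<Rightarrow> (nat \<Rightarrow> real) \<Rightarrow> nat \<Rightarrow> 'c \<Rightarrow> nat \<Rightarrow> nat \<Rightarrow> real" where
  "wL eps f Xs \<alpha> k X Y t x a a' =
     max 0 (sqrt (2 * phiL eps f k X t (alphaII \<alpha> k (card Xs)) x a a'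
                    * (S2 f k X Y t a * Sig f k X t x a + S2 f k X Y t a' * Sig f k X t x a'))
            - (f x \<bullet> betahat f k X Y t a - f x \<bullet> betahat f k X Y t a'))"

definition rL :: "real \<Rightarrow> ('c \<Rightarrow> real^'d) \<Rightarrow> 'c set \<Rightarrow> real \<Rightarrow> nat
     \<Rightarrow> (nat \<Rightarrow> 'c) \<Rightarrow> (nat \<Rightarrow> real) \<Rightarrow> nat \<Rightarrow> 'c \<Rightarrow> real" where
  "rL eps f Xs \<alpha> k X Y t x =
     Max {wL eps f Xs \<alpha> k X Y t x (pihat f k X Y t x) a | a. a < k \<and> a \<noteq> pihat f k X Y t x}"

definition stopII :: "real \<Rightarrow> ('c \<Rightarrow> real^'d) \<Rightarrow> 'c set \<Rightarrow> ('c \<Rightarrow> real) \<Rightarrow> real \<Rightarrow> real \<Rightarrow> nat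
     \<Rightarrow> (nat \<Rightarrow> 'c) \<Rightarrow> (nat \<Rightarrow> real) \<Rightarrow> nat \<Rightarrow> bool" where
  "stopII eps f Xs p \<alpha> \<delta> k X Y t \<longleftrightarrow> (\<Sum>x\<in>Xs. p x * rL eps f Xs \<alpha> k X Y t x) \<le> \<delta>"

definition tauI :: "real \<Rightarrow> ('c \<Rightarrow> real^'d) \<Rightarrow> 'c set \<Rightarrow> ('c \<Rightarrow> real) \<Rightarrow> real \<Rightarrow> real \<Rightarrow> nat
     \<Rightarrow> (nat \<Rightarrow> 'c) \<Rightarrow> (nat \<Rightarrow> real) \<Rightarrow> enat" where
  "tauI eps f Xs p \<alpha> \<delta> k X Y =
     (INF t\<in>{t. t0 f k X \<le> enat t \<and> stopI eps f Xs p \<alpha> \<delta> k X Y t}. enat t)"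

definition tauII :: "real \<Rightarrow> ('c \<Rightarrow> real^'d) \<Rightarrow> 'c set \<Rightarrow> ('c \<Rightarrow> real) \<Rightarrow> real \<Rightarrow> real \<Rightarrow> nat
     \<Rightarrow> (nat \<Rightarrow> 'c) \<Rightarrow> (nat \<Rightarrow> real) \<Rightarrow> enat" where
  "tauII eps f Xs p \<alpha> \<delta> k X Y =
     (INF t\<in>{t. t0 f k X \<le> enat t \<and> stopII eps f Xs p \<alpha> \<delta> k X Y t}. enat t)"

text \<open>Probability model: W_s = (X_s, Z_s) i.i.d., X_s ~ P^s independent of Z_s ~ N(0,1).\<close>
definition sample_law :: "'c pmf \<Rightarrow> ('c \<times> real) measure" where
  "sample_law Ps = measure_pmf Ps \<Otimes>\<^sub>M density lborel std_normal_density"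

definition iid_model :: "'m measure \<Rightarrow> 'c pmf \<Rightarrow> (nat \<Rightarrow> 'm \<Rightarrow> 'c \<times> real) \<Rightarrow> bool" where
  "iid_model M Ps W \<longleftrightarrow> prob_space M \<and>
     prob_space.indep_vars M (\<lambda>_. sample_law Ps) W UNIV \<and>
     (\<forall>s. distr M (sample_law Ps) (W s) = sample_law Ps)"

definition ETI :: "'m measure \<Rightarrow> (nat \<Rightarrow> 'm \<Rightarrow> 'c \<times> real) \<Rightarrow> real \<Rightarrow> ('c \<Rightarrow> real^'d) \<Rightarrow> 'c set
     \<Rightarrow> ('c \<Rightarrow> real) \<Rightarrow> (nat \<Rightarrow> real^'d) \<Rightarrow> (nat \<Rightarrow> real) \<Rightarrow> real \<Rightarrow> real \<Rightarrow> nat \<Rightarrow> ennreal" where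
  "ETI M W eps f Xs p \<beta> \<sigma>2 \<alpha> \<delta> k =
     (\<integral>\<^sup>+ \<omega>. ennreal_of_enat (tauI eps f Xs p \<alpha> \<delta> k (\<lambda>s. fst (W s \<omega>))
        (obsY f \<beta> \<sigma>2 k (\<lambda>s. fst (W s \<omega>)) (\<lambda>s. snd (W s \<omega>)))) \<partial>M)"

definition ETII :: "'m measure \<Rightarrow> (nat \<Rightarrow> 'm \<Rightarrow> 'c \<times> real) \<Rightarrow> real \<Rightarrow> ('c \<Rightarrow> real^'d) \<Rightarrow> 'c set
     \<Rightarrow> ('c \<Rightarrow> real) \<Rightarrow> (nat \<Rightarrow> real^'d) \<Rightarrow> (nat \<Rightarrow> real) \<Rightarrow> real \<Rightarrow> real \<Rightarrow> nat \<Rightarrow> ennreal" where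
  "ETII M W eps f Xs p \<beta> \<sigma>2 \<alpha> \<delta> k =
     (\<integral>\<^sup>+ \<omega>. ennreal_of_enat (tauII eps f Xs p \<alpha> \<delta> k (\<lambda>s. fst (W s \<omega>))
        (obsY f \<beta> \<sigma>2 k (\<lambda>s. fst (W s \<omega>)) (\<lambda>s. snd (W s \<omega>)))) \<partial>M)"

end

theory Submission
  imports Defs
begin

text \<open>
  Under equal allocation every action has q samples after q rounds. By Chernoff bounds, outside an
  event of probability O(k m exp (- c q)) every context has been seen about as often as expected
  and the noise energy of every action is O(q); moreover, almost surely no new observation is fitted
  exactly by the previous least-squares estimate, so the residual variances are positive. Outside
  that event the design matrices dominate q \<mu>/2 times the identity, so \<Sigma>(x,a) is of order 1/q,
  S^2(a) = O(1), and both thresholds \<phi> are O(log (q k m / \<alpha>)); hence both rules have stopped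
  by time k (q + 1) as soon as q is a large enough multiple of log (k m / \<alpha>). Summing the geometric
  tail of the bad events bounds E \<tau> by k (Q + 1) + O(k^2 exp (- c Q)) for every such Q, and
  Q of order log k (for fixed \<alpha>) or log (1/\<alpha>) (for fixed k) gives the two claims.
\<close>

section \<open>Quadratic forms and inverse matrices\<close>

lemma outer_mult_vec: "outer u *v v = (u \<bullet> v) *\<^sub>R u"
  by (simp add: outer_def matrix_vector_mult_def vec_eq_iff inner_vec_def sum_distrib_left mult_ac)

lemma sum_matrix_vector_mult: "(\<Sum>s\<in>S. A s) *v v = (\<Sum>s\<in>S. A s *v v)"
  by (induct S rule: infinite_finite_induct) (auto simp: matrix_vector_mult_add_rdistrib)

lemma coercive_imp_posdef:
  fixes A :: "real^'d^'d"
  assumes "c > 0" and "\<forall>v. c * (norm v)\<^sup>2 \<le> v \<bullet> (A *v v)"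
  shows "posdef A"
  unfolding posdef_def using assms by (metis less_le_trans mult_pos_pos zero_less_norm_iff zero_less_power)

lemma posdef_imp_coercive:
  fixes A :: "real^'d^'d"
  assumes "posdef A"
  shows "\<exists>\<mu>>0. \<forall>v. \<mu> * (norm v)\<^sup>2 \<le> v \<bullet> (A *v v)"
proof -
  have "continuous_on (sphere 0 1) ((*v) A)"
    by (intro linear_continuous_on) (simp add: linear_linear matrix_vector_mul_linear)
  then have cont: "continuous_on (sphere 0 1) (\<lambda>v::real^'d. v \<bullet> (A *v v))"
    by (intro continuous_intros)
  obtain u where u: "u \<in> sphere 0 1" and umin: "\<forall>y\<in>sphere 0 1. u \<bullet> (A *v u) \<le> y \<bullet> (A *v y)"
    using continuous_attains_inf[OF compact_sphere _ cont] by auto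
  define \<mu> where "\<mu> = u \<bullet> (A *v u)"
  have "u \<noteq> 0" using u by auto
  then have "\<mu> > 0" using assms unfolding posdef_def \<mu>_def by blast
  moreover have "\<mu> * (norm v)\<^sup>2 \<le> v \<bullet> (A *v v)" for v
  proof (cases "v = 0")
    case False
    define w where "w = (1 / norm v) *\<^sub>R v"
    have "w \<in> sphere 0 1" using False by (simp add: w_def)
    moreover have "v \<bullet> (A *v v) = (norm v)\<^sup>2 * (w \<bullet> (A *v w))"
      using False by (simp add: w_def matrix_vector_mult_scaleR power2_eq_square)
    ultimately show ?thesis
      using umin unfolding \<mu>_def by (metis mem_sphere_0 mult.commute mult_left_mono zero_le_power2)
  qed simp
  ultimately show ?thesis by blast
qed

lemma posdef_imp_invertible:
  fixes A :: "real^'d^'d"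
  assumes "posdef A"
  shows "invertible A"
proof -
  have "inj ((*v) A)"
  proof (rule linear_injective_0[THEN iffD2])
    show "linear ((*v) A)" by (simp add: matrix_vector_mul_linear)
    show "\<forall>x. A *v x = 0 \<longrightarrow> x = 0"
      using assms unfolding posdef_def by (metis inner_zero_right order_less_irrefl)
  qed
  then show ?thesis using matrix_left_invertible_injective invertible_left_inverse by blast
qed

lemma matrix_inv_mult_vec:
  fixes A :: "real^'d^'d"
  assumes "invertible A"
  shows "A *v (matrix_inv A *v c) = c" "matrix_inv A *v (A *v c) = c"
proof -
  from assms obtain B where "A ** B = mat 1 \<and> B ** A = mat 1" unfolding invertible_def by blast
  then have "A ** matrix_inv A = mat 1 \<and> matrix_inv A ** A = mat 1"
    unfolding matrix_inv_def by (rule someI)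
  then show "A *v (matrix_inv A *v c) = c" "matrix_inv A *v (A *v c) = c"
    by (simp_all add: matrix_vector_mul_assoc)
qed

lemma matrix_inv_cramer:
  fixes A :: "real^'d^'d"
  assumes "det A \<noteq> 0"
  shows "matrix_inv A *v c = (\<chi> j. det (\<chi> i l. if l = j then c$i else A$i$l) / det A)"
  using cramer[OF assms] matrix_inv_mult_vec(1) assms invertible_det_nz by blast

lemma matrix_inv_singular:
  fixes A :: "'a::field^'n^'n"
  assumes "\<not> invertible A"
  shows "matrix_inv A = matrix_inv (0 :: 'a^'n^'n)"
proof -
  have "\<not> invertible (0 :: 'a^'n^'n)"
    unfolding invertible_def by (auto simp: vec_eq_iff mat_def)
  then show ?thesis using assms unfolding matrix_inv_def invertible_def by metis
qed

lemma borel_measurable_matrix_inv_mult_vec: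
  fixes A :: "'w \<Rightarrow> real^'n^'n" and c :: "'w \<Rightarrow> real^'n"
  assumes A: "\<And>i j. (\<lambda>w. A w $ i $ j) \<in> borel_measurable N" and c: "\<And>i. (\<lambda>w. c w $ i) \<in> borel_measurable N"
  shows "(\<lambda>w. (matrix_inv (A w) *v c w) $ j) \<in> borel_measurable N"
proof -
  \<comment> \<open>Cramer's rule where A w is invertible, and a fixed linear map elsewhere.\<close>
  have eq: "(matrix_inv (A w) *v c w) $ j =
      (if det (A w) = 0 then (\<Sum>i\<in>UNIV. matrix_inv (0::real^'n^'n) $ j $ i * c w $ i)
       else det (\<chi> i l. if l = j then c w $ i else A w $ i $ l) / det (A w))" for w
  proof (cases "det (A w) = 0")
    case True
    then show ?thesis
      using matrix_inv_singular[of "A w"] invertible_det_nz[of "A w"] by (simp add: matrix_vector_mult_def)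
  next
    case False
    then show ?thesis using matrix_inv_cramer[OF False, of "c w"] by simp
  qed
  have det: "(\<lambda>w. det (B w)) \<in> borel_measurable N" if "\<And>i j. (\<lambda>w. B w $ i $ j) \<in> borel_measurable N"
    for B :: "'w \<Rightarrow> real^'n^'n"
    unfolding det_def using that by measurable
  have "(\<lambda>w. det (A w)) \<in> borel_measurable N" by (rule det[OF A])
  moreover have "(\<lambda>w. det (\<chi> i l. if l = j then c w $ i else A w $ i $ l)) \<in> borel_measurable N"
  proof (rule det)
    fix i l
    show "(\<lambda>w. (\<chi> i l. if l = j then c w $ i else A w $ i $ l) $ i $ l) \<in> borel_measurable N"
      by (cases "l = j") (simp_all add: A c)
  qed
  ultimately show ?thesis unfolding eq using c by measurable
qed

lemma inverse_quadratic_form_le: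
  fixes A :: "real^'d^'d"
  assumes c: "c > 0" and coerc: "\<forall>v. c * (norm v)\<^sup>2 \<le> v \<bullet> (A *v v)" and u: "u \<noteq> 0"
  shows "0 < u \<bullet> (matrix_inv A *v u)" "u \<bullet> (matrix_inv A *v u) \<le> (norm u)\<^sup>2 / c"
proof -
  have pd: "posdef A" by (rule coercive_imp_posdef[OF c coerc])
  define g where "g = matrix_inv A *v u"
  have Ag: "A *v g = u" unfolding g_def by (rule matrix_inv_mult_vec(1)[OF posdef_imp_invertible[OF pd]])
  have g0: "g \<noteq> 0" using Ag u by auto
  have ug: "u \<bullet> g = g \<bullet> (A *v g)" using Ag by (simp add: inner_commute)
  then show "0 < u \<bullet> (matrix_inv A *v u)"
    using pd g0 unfolding posdef_def g_def[symmetric] by simp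
  have "c * (norm g)\<^sup>2 \<le> norm u * norm g"
    using coerc ug norm_cauchy_schwarz[of u g] by (metis order_trans)
  then have ng: "c * norm g \<le> norm u" using g0 by (simp add: power2_eq_square)
  have "u \<bullet> g \<le> norm u * norm g" by (rule norm_cauchy_schwarz)
  also have "\<dots> \<le> norm u * (norm u / c)"
    using ng c by (intro mult_left_mono) (auto simp: field_simps)
  finally show "u \<bullet> (matrix_inv A *v u) \<le> (norm u)\<^sup>2 / c" by (simp add: g_def power2_eq_square)
qed

lemma inverse_quadratic_form_ge:
  fixes A :: "real^'d^'d"
  assumes inv: "invertible A" and sym: "\<forall>v w. v \<bullet> (A *v w) = w \<bullet> (A *v v)"
    and psd: "\<forall>v. 0 \<le> v \<bullet> (A *v v)" and C: "C > 0" and upper: "u \<bullet> (A *v u) \<le> C * (norm u)\<^sup>2"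
  shows "(norm u)\<^sup>2 / C \<le> u \<bullet> (matrix_inv A *v u)"
proof -
  define g where "g = matrix_inv A *v u"
  have Ag: "A *v g = u" unfolding g_def by (rule matrix_inv_mult_vec(1)[OF inv])
  define \<tau> where "\<tau> = 1 / C"
  \<comment> \<open>Expand the nonnegative form at g - \<tau> u.\<close>
  have "0 \<le> (g - \<tau> *\<^sub>R u) \<bullet> (A *v (g - \<tau> *\<^sub>R u))" using psd by blast
  also have "\<dots> = g \<bullet> (A *v g) - 2 * \<tau> * (u \<bullet> (A *v g)) + \<tau>\<^sup>2 * (u \<bullet> (A *v u))"
    using sym[rule_format, of g u]
    by (simp add: matrix_vector_mult_diff_distrib matrix_vector_mult_scaleR inner_diff_left
        inner_diff_right algebra_simps power2_eq_square)
  also have "\<dots> \<le> u \<bullet> g - 2 * \<tau> * (norm u)\<^sup>2 + \<tau>\<^sup>2 * (C * (norm u)\<^sup>2)"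
    using upper Ag by (simp add: inner_commute power2_norm_eq_inner mult_left_mono)
  also have "\<dots> = u \<bullet> g - \<tau> * (norm u)\<^sup>2"
    using C by (simp add: \<tau>_def power2_eq_square field_simps)
  finally show ?thesis by (simp add: g_def \<tau>_def)
qed

section \<open>Design matrices and least squares under round-robin allocation\<close>

lemma finite_samp [simp]: "finite (samp k t a)"
  unfolding samp_def by auto

lemma samp_round:
  assumes "a < k"
  shows "samp k (k * q) a = (\<lambda>j. a + j * k) ` {..<q}"
proof (rule set_eqI)
  fix s
  show "s \<in> samp k (k * q) a \<longleftrightarrow> s \<in> (\<lambda>j. a + j * k) ` {..<q}"
  proof
    assume "s \<in> samp k (k * q) a"
    then have s: "s < k * q" "s mod k = a" unfolding samp_def act_def by auto
    have "s = a + (s div k) * k" using s(2) by (metis add.commute div_mult_mod_eq)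
    moreover have "s div k < q" using s(1) by (metis less_mult_imp_div_less mult.commute)
    ultimately show "s \<in> (\<lambda>j. a + j * k) ` {..<q}" by auto
  next
    assume "s \<in> (\<lambda>j. a + j * k) ` {..<q}"
    then obtain j where j: "j < q" "s = a + j * k" by auto
    have "a + j * k < k * (j + 1)" using assms by simp
    also have "\<dots> \<le> k * q" using j by (intro mult_left_mono) auto
    finally show "s \<in> samp k (k * q) a" unfolding samp_def act_def using j assms by auto
  qed
qed

lemma card_samp_round:
  assumes "a < k"
  shows "card (samp k (k * q) a) = q"
proof -
  have "inj_on (\<lambda>j. a + j * k) {..<q}" using assms by (auto simp: inj_on_def)
  then show ?thesis unfolding samp_round[OF assms] by (simp add: card_image)
qed

lemma Nt_round: "a < k \<Longrightarrow> Nt k (k * q) a = q"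
  unfolding Nt_def by (rule card_samp_round)

lemma samp_round_Suc:
  assumes "a < k"
  shows "samp k (k * Suc q) a = insert (a + q * k) (samp k (k * q) a)"
  unfolding samp_round[OF assms] lessThan_Suc by auto

lemma Dt_mult_vec: "Dt f k X t a *v v = (\<Sum>s\<in>samp k t a. (f (X s) \<bullet> v) *\<^sub>R f (X s))"
  unfolding Dt_def sum_matrix_vector_mult outer_mult_vec ..

lemma inner_Dt_mult_vec: "u \<bullet> (Dt f k X t a *v v) = (\<Sum>s\<in>samp k t a. (f (X s) \<bullet> v) * (f (X s) \<bullet> u))"
  unfolding Dt_mult_vec inner_sum_right by (simp add: inner_commute)

lemma Dt_quadratic_form: "v \<bullet> (Dt f k X t a *v v) = (\<Sum>s\<in>samp k t a. (f (X s) \<bullet> v)\<^sup>2)"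
  unfolding inner_Dt_mult_vec by (simp add: power2_eq_square)

lemma Dt_symmetric: "v \<bullet> (Dt f k X t a *v w) = w \<bullet> (Dt f k X t a *v v)"
  unfolding inner_Dt_mult_vec by (simp add: mult.commute)

lemma Dt_quadratic_form_le:
  assumes "\<forall>s\<in>samp k t a. (norm (f (X s)))\<^sup>2 \<le> U"
  shows "v \<bullet> (Dt f k X t a *v v) \<le> real (card (samp k t a)) * U * (norm v)\<^sup>2"
proof -
  have "(f (X s) \<bullet> v)\<^sup>2 \<le> U * (norm v)\<^sup>2" if "s \<in> samp k t a" for s
  proof -
    have "(f (X s) \<bullet> v)\<^sup>2 \<le> (norm (f (X s)) * norm v)\<^sup>2"
      by (metis Cauchy_Schwarz_ineq2 abs_ge_zero power2_abs power_mono)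
    also have "\<dots> \<le> U * (norm v)\<^sup>2"
      using assms that by (simp add: power_mult_distrib mult_right_mono)
    finally show ?thesis .
  qed
  then have "(\<Sum>s\<in>samp k t a. (f (X s) \<bullet> v)\<^sup>2) \<le> (\<Sum>s\<in>samp k t a. U * (norm v)\<^sup>2)"
    by (rule sum_mono)
  then show ?thesis unfolding Dt_quadratic_form by simp
qed

lemma Sig_le:
  assumes "c > 0" and "\<forall>v. c * (norm v)\<^sup>2 \<le> v \<bullet> (Dt f k X t a *v v)" and "f x \<noteq> 0"
  shows "0 < Sig f k X t x a" "Sig f k X t x a \<le> (norm (f x))\<^sup>2 / c"
  using inverse_quadratic_form_le[OF assms] unfolding Sig_def by auto

lemma Sig_ge:
  assumes inv: "invertible (Dt f k X t a)" and U: "\<forall>s\<in>samp k t a. (norm (f (X s)))\<^sup>2 \<le> U"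
    and pos: "real (card (samp k t a)) * U > 0"
  shows "(norm (f x))\<^sup>2 / (real (card (samp k t a)) * U) \<le> Sig f k X t x a"
  unfolding Sig_def
proof (rule inverse_quadratic_form_ge[OF inv _ _ pos])
  show "\<forall>v w. v \<bullet> (Dt f k X t a *v w) = w \<bullet> (Dt f k X t a *v v)" using Dt_symmetric by blast
  show "\<forall>v. 0 \<le> v \<bullet> (Dt f k X t a *v v)" by (simp add: Dt_quadratic_form sum_nonneg)
  show "f x \<bullet> (Dt f k X t a *v f x) \<le> real (card (samp k t a)) * U * (norm (f x))\<^sup>2"
    by (rule Dt_quadratic_form_le) (rule U)
qed

definition rss :: "('c \<Rightarrow> real^'d) \<Rightarrow> nat \<Rightarrow> (nat \<Rightarrow> 'c) \<Rightarrow> (nat \<Rightarrow> real) \<Rightarrow> nat \<Rightarrow> nat \<Rightarrow> real" where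
  "rss f k X Y t a = (\<Sum>s\<in>samp k t a. (Y s - f (X s) \<bullet> betahat f k X Y t a)\<^sup>2)"

lemma S2_rss: "S2 (f :: 'c \<Rightarrow> real^'d) k X Y t a = rss f k X Y t a / (real (Nt k t a) - real CARD('d))"
  by (simp add: S2_def rss_def)

lemma Dt_betahat:
  assumes "invertible (Dt f k X t a)"
  shows "Dt f k X t a *v betahat f k X Y t a = (\<Sum>s\<in>samp k t a. Y s *\<^sub>R f (X s))"
  unfolding betahat_def by (rule matrix_inv_mult_vec(1)[OF assms])

lemma betahat_cong:
  assumes "\<And>s. s \<in> samp k t a \<Longrightarrow> X s = X' s \<and> Y s = Y' s"
  shows "betahat f k X Y t a = betahat f k X' Y' t a"
proof -
  have "Dt f k X t a = Dt f k X' t a" unfolding Dt_def using assms by (intro sum.cong) auto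
  moreover have "(\<Sum>s\<in>samp k t a. Y s *\<^sub>R f (X s)) = (\<Sum>s\<in>samp k t a. Y' s *\<^sub>R f (X' s))"
    using assms by (intro sum.cong) auto
  ultimately show ?thesis unfolding betahat_def by simp
qed

lemma rss_le:
  assumes inv: "invertible (Dt f k X t a)"
  shows "rss f k X Y t a \<le> (\<Sum>s\<in>samp k t a. (Y s - f (X s) \<bullet> b)\<^sup>2)"
proof -
  let ?S = "samp k t a" and ?bh = "betahat f k X Y t a"
  define e where "e = ?bh - b"
  define r where "r s = Y s - f (X s) \<bullet> ?bh" for s
  have normal_eq: "(\<Sum>s\<in>?S. r s * (f (X s) \<bullet> e)) = 0"
  proof -
    have "(\<Sum>s\<in>?S. r s * (f (X s) \<bullet> e))
        = (\<Sum>s\<in>?S. Y s *\<^sub>R f (X s)) \<bullet> e - e \<bullet> (Dt f k X t a *v ?bh)"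
      unfolding r_def by (simp add: left_diff_distrib sum_subtractf inner_sum_left inner_Dt_mult_vec)
    then show ?thesis unfolding Dt_betahat[OF inv] by (simp add: inner_commute)
  qed
  have "(\<Sum>s\<in>?S. (Y s - f (X s) \<bullet> b)\<^sup>2) = (\<Sum>s\<in>?S. (r s + f (X s) \<bullet> e)\<^sup>2)"
    unfolding r_def e_def by (simp add: inner_diff_right)
  also have "\<dots> = (\<Sum>s\<in>?S. (r s)\<^sup>2) + 2 * (\<Sum>s\<in>?S. r s * (f (X s) \<bullet> e)) + (\<Sum>s\<in>?S. (f (X s) \<bullet> e)\<^sup>2)"
    by (simp add: power2_sum sum.distrib sum_distrib_left mult.assoc)
  also have "\<dots> \<ge> (\<Sum>s\<in>?S. (r s)\<^sup>2)" unfolding normal_eq by (simp add: sum_nonneg)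
  finally show ?thesis unfolding rss_def r_def .
qed

lemma rss_obsY_le:
  assumes "invertible (Dt f k X t a)" and "\<sigma>2 a \<ge> 0"
  shows "rss f k X (obsY f \<beta> \<sigma>2 k X Z) t a \<le> \<sigma>2 a * (\<Sum>s\<in>samp k t a. (Z s)\<^sup>2)"
proof -
  have "rss f k X (obsY f \<beta> \<sigma>2 k X Z) t a \<le> (\<Sum>s\<in>samp k t a. (obsY f \<beta> \<sigma>2 k X Z s - f (X s) \<bullet> \<beta> a)\<^sup>2)"
    by (rule rss_le[OF assms(1)])
  also have "\<dots> = (\<Sum>s\<in>samp k t a. \<sigma>2 a * (Z s)\<^sup>2)"
    by (intro sum.cong refl) (auto simp: obsY_def samp_def power_mult_distrib assms(2))
  finally show ?thesis by (simp add: sum_distrib_left)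
qed

lemma pihat_max:
  assumes "k > 0"
  shows "pihat f k X Y t x < k"
    "b < k \<Longrightarrow> f x \<bullet> betahat f k X Y t b \<le> f x \<bullet> betahat f k X Y t (pihat f k X Y t x)"
proof -
  let ?g = "\<lambda>b. f x \<bullet> betahat f k X Y t b"
  have fin: "finite (?g ` {..<k})" "?g ` {..<k} \<noteq> {}" using assms by auto
  then have "Max (?g ` {..<k}) \<in> ?g ` {..<k}" by (rule Max_in)
  then obtain a where "a < k" "?g a = Max (?g ` {..<k})" by auto
  then have "\<exists>a. a < k \<and> (\<forall>b<k. ?g b \<le> ?g a)" using fin by (intro exI[of _ a]) auto
  then have "pihat f k X Y t x < k \<and> (\<forall>b<k. ?g b \<le> ?g (pihat f k X Y t x))"
    unfolding pihat_def by (rule someI_ex)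
  then show "pihat f k X Y t x < k" "b < k \<Longrightarrow> ?g b \<le> ?g (pihat f k X Y t x)" by auto
qed

section \<open>Thresholds\<close>

lemma ratio_minus_le:
  fixes n0 t2 Q eps :: real
  assumes eps: "eps > 0" and n0: "0 \<le> n0" and t2: "t2 + 1 \<ge> 4" and Qh: "1/2 \<le> Q"
  shows "n0 * t2 / max (Q * (t2 + 1) - 1) eps - n0 \<le> 4 * n0 * max 0 (1 - Q)"
proof (cases "Q \<ge> 1")
  case True
  have "1 * (t2 + 1) \<le> Q * (t2 + 1)" using True t2 by (intro mult_right_mono) auto
  then have "t2 \<le> max (Q * (t2 + 1) - 1) eps" by simp
  then have "n0 * t2 / max (Q * (t2 + 1) - 1) eps \<le> n0"
    using n0 t2 eps by (simp add: divide_le_eq mult_left_mono max_def)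
  moreover have "0 \<le> 4 * n0 * max 0 (1 - Q)" using n0 by simp
  ultimately show ?thesis by linarith
next
  case False
  define Mx where "Mx = max (Q * (t2 + 1) - 1) eps"
  have "(1/2) * 4 \<le> Q * (t2 + 1)" using Qh t2 by (intro mult_mono) auto
  then have QT: "Q * (t2 + 1) \<ge> 2" by simp
  have Mx1: "Q * (t2 + 1) / 2 \<le> Mx" unfolding Mx_def using QT by linarith
  have Mx0: "Mx > 0" using Mx1 QT by simp
  have "n0 * t2 / Mx - n0 = n0 * ((t2 - Mx) / Mx)" using Mx0 by (simp add: field_simps)
  also have "\<dots> \<le> n0 * ((1 - Q) * (t2 + 1) / (Q * (t2 + 1) / 2))"
  proof (intro mult_left_mono frac_le)
    show "t2 - Mx \<le> (1 - Q) * (t2 + 1)" unfolding Mx_def by (auto simp: algebra_simps)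
  qed (use n0 False QT Mx1 t2 in auto)
  also have "\<dots> = n0 * (2 * (1 - Q) / Q)"
  proof -
    have "Q * (t2 + 1) \<noteq> 0" "Q \<noteq> 0" using QT Qh by auto
    then show ?thesis by (simp add: field_simps)
  qed
  also have "\<dots> \<le> n0 * (2 * (1 - Q) / (1/2))"
    using Qh False n0 by (intro mult_left_mono divide_left_mono) auto
  finally show ?thesis using False unfolding Mx_def by (simp add: algebra_simps)
qed

lemma gammaL_le:
  fixes eps d t1 t2 al l :: real
  assumes eps: "eps > 0" and dt: "d \<le> t1" and t2: "t2 + 1 \<ge> 4" and al: "al \<noteq> 0"
    and l0: "l \<ge> 0" and ll: "ln ((t2 + 1) / al\<^sup>2) \<le> l" and nl: "t1 - d + 1 \<ge> 2 * l"
  shows "gammaL eps d t1 t2 al \<le> 4 * l"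
proof -
  define n where "n = t1 - d + 1"
  have n1: "n \<ge> 1" using dt unfolding n_def by simp
  define \<rho> where "\<rho> = al\<^sup>2 / (t2 + 1)"
  have \<rho>0: "\<rho> > 0" using al t2 unfolding \<rho>_def by simp
  define Q where "Q = \<rho> powr (1 / n)"
  \<comment> \<open>exp x \<ge> 1 + x gives Q \<ge> 1 - l/n.\<close>
  have "ln \<rho> \<ge> - l" using ll al t2 by (simp add: \<rho>_def ln_div)
  then have "ln \<rho> / n \<ge> - l / n" using n1 by (intro divide_right_mono) auto
  moreover have "Q \<ge> 1 + ln \<rho> / n"
    unfolding Q_def powr_def using \<rho>0 exp_ge_add_one_self[of "ln \<rho> / n"] by simp
  ultimately have Q1: "1 - l / n \<le> Q" by simp
  moreover have "l / n \<le> 1/2" using nl n1 unfolding n_def[symmetric] by (simp add: field_simps)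
  ultimately have Qh: "1/2 \<le> Q" by simp
  have "gammaL eps d t1 t2 al = (t1 - d) * t2 / max (Q * (t2 + 1) - 1) eps - (t1 - d)"
    unfolding gammaL_def Q_def \<rho>_def n_def by simp
  also have "\<dots> \<le> 4 * (t1 - d) * max 0 (1 - Q)"
    by (rule ratio_minus_le) (use eps dt t2 Qh in auto)
  also have "\<dots> \<le> 4 * (t1 - d) * (l / n)"
    using Q1 l0 n1 dt by (intro mult_left_mono) auto
  also have "\<dots> \<le> 4 * l"
    using l0 dt n1 by (simp add: n_def field_simps mult_left_mono)
  finally show ?thesis .
qed

lemma gammaL_level_le:
  fixes eps d q A B ar a1 R :: real
  assumes eps: "eps > 0" and dq: "d \<le> q" and A4: "A + 1 \<ge> 4" and B4: "B + 1 \<ge> 4"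
    and AR: "A + 1 \<le> R" and BR: "B + 1 \<le> R" and a1: "a1 > 0" and ar: "ar \<ge> a1"
    and l0: "2 * ln (R / a1) \<ge> 0" and nl: "q - d + 1 \<ge> 2 * (2 * ln (R / a1))"
  shows "gammaL eps d q A (ar * (B + 1) powr (-1/2)) \<le> 4 * (2 * ln (R / a1))"
proof (rule gammaL_le[OF eps dq A4 _ l0 _ nl])
  have Bp: "B + 1 > 0" using B4 by simp
  show al: "ar * (B + 1) powr (- 1 / 2) \<noteq> 0" using a1 ar Bp by simp
  have "((B + 1) powr (-1/2))\<^sup>2 = 1 / (B + 1)"
    using Bp by (simp add: power2_eq_square powr_add[symmetric] powr_minus_divide)
  then have "(ar * (B + 1) powr (- 1 / 2))\<^sup>2 = ar\<^sup>2 / (B + 1)"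
    by (simp add: power_mult_distrib)
  then have "(A + 1) / (ar * (B + 1) powr (- 1 / 2))\<^sup>2 = (A + 1) * (B + 1) / ar\<^sup>2"
    using Bp by simp
  also have "\<dots> \<le> R * R / a1\<^sup>2"
    using AR BR A4 B4 a1 ar by (intro frac_le mult_mono power_mono) auto
  also have "\<dots> = (R / a1)\<^sup>2" by (simp add: power2_eq_square)
  finally have le: "(A + 1) / (ar * (B + 1) powr (- 1 / 2))\<^sup>2 \<le> (R / a1)\<^sup>2" .
  have "ln ((A + 1) / (ar * (B + 1) powr (- 1 / 2))\<^sup>2) \<le> ln ((R / a1)\<^sup>2)"
    using le A4 al by (intro ln_mono) auto
  also have "\<dots> = 2 * ln (R / a1)" using AR A4 a1 by (simp add: ln_realpow)
  finally show "ln ((A + 1) / (ar * (B + 1) powr (- 1 / 2))\<^sup>2) \<le> 2 * ln (R / a1)" .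
qed

lemma phiL_le:
  fixes f :: "'c \<Rightarrow> real^'d"
  assumes eps: "eps > 0" and Na: "Nt k t a = q" and Nb: "Nt k t b = q"
    and dq: "real CARD('d) \<le> real q"
    and A4: "1 / Sig f k X t x a + 1 \<ge> 4" and B4: "1 / Sig f k X t x b + 1 \<ge> 4"
    and AR: "1 / Sig f k X t x a + 1 \<le> R" and BR: "1 / Sig f k X t x b + 1 \<le> R"
    and a1: "a1 > 0" and ar: "ar \<ge> a1"
    and l0: "2 * ln (R / a1) \<ge> 0" and nl: "real q - real CARD('d) + 1 \<ge> 2 * (2 * ln (R / a1))"
  shows "phiL eps f k X t ar x a b \<le> 2 * (2 * ln (R / a1))"
  using gammaL_level_le[OF eps dq A4 B4 AR BR a1 ar l0 nl]
    gammaL_level_le[OF eps dq B4 A4 BR AR a1 ar l0 nl]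
  unfolding phiL_def Na Nb by simp

lemma alphaII_pos: "0 < \<alpha> \<Longrightarrow> k \<ge> 2 \<Longrightarrow> m \<ge> 1 \<Longrightarrow> 0 < alphaII \<alpha> k m"
  unfolding alphaII_def by simp

lemma alphaII_le_1:
  assumes "\<alpha> < 1" "k \<ge> 2" "m \<ge> 1"
  shows "alphaII \<alpha> k m \<le> 1"
proof -
  have "1 * 1 \<le> real (k - 1) * real m" using assms by (intro mult_mono) auto
  then show ?thesis
    unfolding alphaII_def using assms(1) by (simp add: divide_le_eq del: of_nat_diff)
qed

lemma alphaII_le_alphaI:
  assumes "0 < \<alpha>" "k \<ge> 2" "m \<ge> 1" "0 < p x" "p x \<le> 1"
  shows "alphaII \<alpha> k m \<le> alphaI \<alpha> k m p x"
proof -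
  have "real (k - 1) * real m * p x \<le> real (k - 1) * real m" using assms by (simp add: mult_left_le)
  moreover have "0 < real (k - 1) * real m * p x" using assms by simp
  ultimately show ?thesis
    unfolding alphaI_def alphaII_def using assms(1) by (intro divide_left_mono) (auto simp del: of_nat_diff)
qed

text \<open>phi_log L U a q bounds \<phi>/2 after q rounds at every level at least a (phiL_round_le).\<close>

definition phi_log :: "real \<Rightarrow> real \<Rightarrow> real \<Rightarrow> nat \<Rightarrow> real" where
  "phi_log L U a q = 2 * ln ((real q * U / L + 1) / a)"

lemma phi_log_nonneg:
  assumes "0 < L" "0 \<le> U" "0 < a" "a \<le> 1"
  shows "0 \<le> phi_log L U a q"
proof -
  have "0 \<le> real q * U / L" using assms by simp
  then have "a \<le> real q * U / L + 1" using assms by linarith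
  then have "1 \<le> (real q * U / L + 1) / a" using assms by (simp add: le_divide_eq)
  then show ?thesis unfolding phi_log_def by simp
qed

lemma ln_le_two_sqrt: "0 < x \<Longrightarrow> ln x \<le> 2 * sqrt (x::real)"
  using ln_le_minus_one[of "sqrt x"] ln_sqrt[of x] by simp

lemma mult_log_lt:
  fixes A B q :: real
  assumes A4: "4 \<le> A" and B: "0 \<le> B" and q: "64 * A\<^sup>2 + 2 * A * B + 1 \<le> q"
  shows "A * (2 * ln q + B) < q"
proof -
  have q0: "0 < q" using q A4 B by (smt (verit) mult_nonneg_nonneg zero_le_power2)
  have "0 \<le> 2 * A * B" using A4 B by simp
  then have "sqrt (64 * A\<^sup>2) \<le> sqrt q" using q by (intro real_sqrt_le_mono) linarith
  then have sq: "8 * A \<le> sqrt q" using A4 by (simp add: real_sqrt_mult)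
  \<comment> \<open>ln q \<le> 2 sqrt q and 8 A \<le> sqrt q make the logarithmic part at most q/2.\<close>
  have "2 * A * ln q \<le> 2 * A * (2 * sqrt q)" using ln_le_two_sqrt[OF q0] A4 by (intro mult_left_mono) auto
  also have "\<dots> = (4 * A) * sqrt q" by simp
  also have "\<dots> \<le> (sqrt q / 2) * sqrt q" using sq q0 by (intro mult_right_mono) auto
  also have "\<dots> = q / 2" using q0 by simp
  finally have "2 * A * ln q \<le> q / 2" .
  moreover have "0 \<le> 64 * A\<^sup>2" by simp
  then have "A * B < q / 2" using q by linarith
  ultimately show ?thesis by (simp add: algebra_simps)
qed

lemma phi_log_le:
  assumes L0: "0 < L" and LU: "L \<le> U" and a: "0 < a" "a \<le> 1" and q: "1 \<le> q"
  shows "phi_log L U a q \<le> 2 * ln (real q) + 2 * ln (2 * U / (L * a))"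
proof -
  have "1 * U \<le> real q * U" using q L0 LU by (intro mult_right_mono) auto
  then have "L \<le> real q * U" using LU by linarith
  then have qUL: "1 \<le> real q * U / L" using L0 by (simp add: le_divide_eq)
  have "real q * U / L + 1 \<le> 2 * (real q * U / L)" using qUL by (simp only: mult_2 add_le_cancel_left)
  then have "(real q * U / L + 1) / a \<le> 2 * (real q * U / L) / a" using a by (intro divide_right_mono) auto
  also have "\<dots> = real q * (2 * U / (L * a))" using L0 a by (simp add: field_simps)
  finally have "phi_log L U a q \<le> 2 * ln (real q * (2 * U / (L * a)))"
    unfolding phi_log_def using qUL a by (intro mult_left_mono ln_mono) auto
  also have "\<dots> = 2 * ln (real q) + 2 * ln (2 * U / (L * a))"
    using ln_mult_pos[of "real q" "2 * U / (L * a)"] q L0 LU a by simp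
  finally show ?thesis .
qed

section \<open>Rounds after which both rules stop\<close>

text \<open>The variance term in the denominator of Ztil and under the square root in wL.\<close>

definition pair_var :: "('c \<Rightarrow> real^'d) \<Rightarrow> nat \<Rightarrow> (nat \<Rightarrow> 'c) \<Rightarrow> (nat \<Rightarrow> real) \<Rightarrow> nat \<Rightarrow> 'c \<Rightarrow> nat \<Rightarrow> nat \<Rightarrow> real" where
  "pair_var f k X Y t x a b = S2 f k X Y t a * Sig f k X t x a + S2 f k X Y t b * Sig f k X t x b"

lemma stopII_if_margin:
  assumes k2: "k \<ge> 2" and ppos: "\<forall>x\<in>Xs. p x > 0" and psum: "(\<Sum>x\<in>Xs. p x) = 1"
    and margin: "\<And>x b. x \<in> Xs \<Longrightarrow> b < k \<Longrightarrow>
      2 * phiL eps f k X t (alphaII \<alpha> k (card Xs)) x (pihat f k X Y t x) b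
        * pair_var f k X Y t x (pihat f k X Y t x) b < \<delta>\<^sup>2"
    and delta: "\<delta> > 0"
  shows "stopII eps f Xs p \<alpha> \<delta> k X Y t"
proof -
  have rL: "rL eps f Xs \<alpha> k X Y t x \<le> \<delta>" if x: "x \<in> Xs" for x
  proof -
    let ?a = "pihat f k X Y t x"
    let ?W = "{wL eps f Xs \<alpha> k X Y t x ?a b | b. b < k \<and> b \<noteq> ?a}"
    have "\<exists>b<k. b \<noteq> ?a" using k2 by (metis One_nat_def less_2_cases_iff less_le_trans not_less_eq_eq)
    then have neW: "?W \<noteq> {}" by auto
    have "wL eps f Xs \<alpha> k X Y t x ?a b \<le> \<delta>" if b: "b < k" for b
    proof -
      have "sqrt (2 * phiL eps f k X t (alphaII \<alpha> k (card Xs)) x ?a b * pair_var f k X Y t x ?a b) < \<delta>"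
        using real_sqrt_less_mono[OF margin[OF x b]] delta by simp
      moreover have "f x \<bullet> betahat f k X Y t b \<le> f x \<bullet> betahat f k X Y t ?a"
        using pihat_max k2 b by simp
      ultimately show ?thesis using delta unfolding wL_def pair_var_def by simp
    qed
    then show ?thesis unfolding rL_def using neW by (auto simp: Max_le_iff)
  qed
  have "(\<Sum>x\<in>Xs. p x * rL eps f Xs \<alpha> k X Y t x) \<le> (\<Sum>x\<in>Xs. p x * \<delta>)"
    using rL ppos by (intro sum_mono mult_left_mono) (auto simp: less_imp_le)
  also have "\<dots> = \<delta>" using psum by (simp add: sum_distrib_right[symmetric])
  finally show ?thesis unfolding stopII_def .
qed

lemma stopI_if_margin:
  assumes k0: "k > 0" and delta: "\<delta> > 0"
    and margin: "\<And>x b. x \<in> Xs \<Longrightarrow> b < k \<Longrightarrow> 0 < pair_var f k X Y t x (pihat f k X Y t x) b \<and>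
      2 * phiL eps f k X t (alphaI \<alpha> k (card Xs) p x) x (pihat f k X Y t x) b
        * pair_var f k X Y t x (pihat f k X Y t x) b < \<delta>\<^sup>2"
  shows "stopI eps f Xs p \<alpha> \<delta> k X Y t"
  unfolding stopI_def
proof (intro ballI allI impI)
  fix x b assume x: "x \<in> Xs" and b: "b < k"
  let ?a = "pihat f k X Y t x"
  let ?V = "pair_var f k X Y t x ?a b"
  let ?ph = "phiL eps f k X t (alphaI \<alpha> k (card Xs) p x) x ?a b"
  have "f x \<bullet> betahat f k X Y t b \<le> f x \<bullet> betahat f k X Y t ?a" using pihat_max k0 b by simp
  then have "\<delta>\<^sup>2 \<le> (f x \<bullet> betahat f k X Y t ?a - f x \<bullet> betahat f k X Y t b + \<delta>)\<^sup>2"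
    using delta by (intro power_mono) auto
  moreover have "?ph < \<delta>\<^sup>2 / (2 * ?V)" using margin[OF x b] by (simp add: field_simps)
  ultimately have "?ph < (f x \<bullet> betahat f k X Y t ?a - f x \<bullet> betahat f k X Y t b + \<delta>)\<^sup>2 / (2 * ?V)"
    using margin[OF x b] by (smt (verit) divide_right_mono)
  then show "Ztil f k X Y x t \<delta> ?a b > ?ph" unfolding Ztil_def pair_var_def .
qed

text \<open>Conditions on the number q of rounds under which both rules stop at time k q, when every
  design matrix dominates c q times the identity, the noise variances are at most \<sigma>M and a is the
  smallest confidence level.\<close>

definition round_suffices :: "nat \<Rightarrow> real \<Rightarrow> real \<Rightarrow> real \<Rightarrow> real \<Rightarrow> real \<Rightarrow> real \<Rightarrow> nat \<Rightarrow> bool" where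
  "round_suffices d L U c \<sigma>M \<delta> a q \<longleftrightarrow>
     2 * d \<le> q \<and> 3 * U \<le> c * real q \<and> 4 * phi_log L U a q \<le> real q \<and>
     64 * \<sigma>M * U * phi_log L U a q < \<delta>\<^sup>2 * c * real q"

lemma round_suffices_pos: "round_suffices CARD('d::finite) L U c \<sigma>M \<delta> a q \<Longrightarrow> q > 0"
  unfolding round_suffices_def using zero_less_card_finite[where 'a='d] by linarith

lemma round_suffices_dim: "round_suffices d L U c \<sigma>M \<delta> a q \<Longrightarrow> 2 * d \<le> q"
  unfolding round_suffices_def by simp

lemma Sig_round_bounds:
  fixes f :: "'c \<Rightarrow> real^'d"
  assumes a: "a < k" and q: "q > 0" and L0: "0 < L"
    and fLU: "\<forall>x\<in>Xs. L \<le> (norm (f x))\<^sup>2 \<and> (norm (f x))\<^sup>2 \<le> U"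
    and c: "c > 0" and coerc: "\<forall>v. c * real q * (norm v)\<^sup>2 \<le> v \<bullet> (Dt f k X (k * q) a *v v)"
    and Xin: "\<forall>s<k * q. X s \<in> Xs" and x: "x \<in> Xs"
  shows "L / (real q * U) \<le> Sig f k X (k * q) x a" "Sig f k X (k * q) x a \<le> U / (c * real q)"
proof -
  have cq: "c * real q > 0" using c q by simp
  have U0: "U > 0" using fLU x L0 by force
  have fx: "f x \<noteq> 0" using fLU x L0 by auto
  have "Sig f k X (k * q) x a \<le> (norm (f x))\<^sup>2 / (c * real q)" by (rule Sig_le(2)[OF cq coerc fx])
  also have "\<dots> \<le> U / (c * real q)" using fLU x cq by (intro divide_right_mono) auto
  finally show "Sig f k X (k * q) x a \<le> U / (c * real q)" .
  have inv: "invertible (Dt f k X (k * q) a)"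
    by (rule posdef_imp_invertible[OF coercive_imp_posdef[OF cq coerc]])
  have "\<forall>s\<in>samp k (k * q) a. (norm (f (X s)))\<^sup>2 \<le> U" using Xin fLU unfolding samp_def by auto
  from Sig_ge[OF inv this] have "(norm (f x))\<^sup>2 / (real q * U) \<le> Sig f k X (k * q) x a"
    using card_samp_round[OF a] q U0 by simp
  moreover have "L / (real q * U) \<le> (norm (f x))\<^sup>2 / (real q * U)"
    using fLU x q U0 by (intro divide_right_mono) auto
  ultimately show "L / (real q * U) \<le> Sig f k X (k * q) x a" by simp
qed

lemma S2_round_le:
  fixes f :: "'c \<Rightarrow> real^'d"
  assumes a: "a < k" and inv: "invertible (Dt f k X (k * q) a)" and dq: "2 * CARD('d) \<le> q"
    and Zb: "(\<Sum>s\<in>samp k (k * q) a. (Z s)\<^sup>2) \<le> 4 * real q" and sig: "0 \<le> \<sigma>2 a" "\<sigma>2 a \<le> \<sigma>M"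
  shows "0 \<le> S2 f k X (obsY f \<beta> \<sigma>2 k X Z) (k * q) a" "S2 f k X (obsY f \<beta> \<sigma>2 k X Z) (k * q) a \<le> 8 * \<sigma>M"
proof -
  let ?Y = "obsY f \<beta> \<sigma>2 k X Z"
  have "q > 0" using dq zero_less_card_finite[where 'a='d] by linarith
  then have q0: "real q > 0" by simp
  have den: "real (Nt k (k * q) a) - real CARD('d) \<ge> real q / 2" using Nt_round[OF a] dq by simp
  have rss0: "0 \<le> rss f k X ?Y (k * q) a" unfolding rss_def by (simp add: sum_nonneg)
  show "0 \<le> S2 f k X ?Y (k * q) a" unfolding S2_rss using rss0 den q0 by simp
  have "rss f k X ?Y (k * q) a \<le> \<sigma>2 a * (\<Sum>s\<in>samp k (k * q) a. (Z s)\<^sup>2)"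
    using inv sig(1) by (rule rss_obsY_le)
  also have "\<dots> \<le> \<sigma>M * (4 * real q)" using sig Zb by (intro mult_mono) (auto intro: sum_nonneg)
  finally have "S2 f k X ?Y (k * q) a \<le> \<sigma>M * (4 * real q) / (real q / 2)"
    unfolding S2_rss using rss0 den q0 by (intro frac_le) auto
  also have "\<dots> = 8 * \<sigma>M" using q0 by simp
  finally show "S2 f k X ?Y (k * q) a \<le> 8 * \<sigma>M" .
qed

lemma reciprocal_round_bounds:
  fixes S L U c q :: real
  assumes lo: "L / (q * U) \<le> S" and hi: "S \<le> U / (c * q)" and qc: "3 * U \<le> c * q"
    and L0: "0 < L" and U0: "0 < U" and c: "0 < c" and q: "0 < q"
  shows "4 \<le> 1 / S + 1" and "1 / S + 1 \<le> q * U / L + 1"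
proof -
  have S0: "0 < S" using lo L0 U0 q by (smt (verit) divide_pos_pos mult_pos_pos)
  have "1 / (U / (c * q)) \<le> 1 / S" using hi S0 U0 c q by (intro divide_left_mono) auto
  moreover have "3 \<le> c * q / U" using qc U0 by (simp add: field_simps)
  ultimately show "4 \<le> 1 / S + 1" by simp
  have "1 / S \<le> 1 / (L / (q * U))" using lo S0 L0 U0 q by (intro divide_left_mono) auto
  then show "1 / S + 1 \<le> q * U / L + 1" by simp
qed

lemma phiL_round_le:
  fixes f :: "'c \<Rightarrow> real^'d"
  assumes eps: "eps > 0" and a: "a < k" and b: "b < k" and L0: "0 < L" and U0: "0 < U" and c: "0 < c"
    and Sa: "L / (real q * U) \<le> Sig f k X (k * q) x a" "Sig f k X (k * q) x a \<le> U / (c * real q)"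
    and Sb: "L / (real q * U) \<le> Sig f k X (k * q) x b" "Sig f k X (k * q) x b \<le> U / (c * real q)"
    and suff: "round_suffices CARD('d) L U c \<sigma>M \<delta> a1 q" and a1: "0 < a1" "a1 \<le> 1" and ar: "a1 \<le> ar"
  shows "phiL eps f k X (k * q) ar x a b \<le> 2 * phi_log L U a1 q"
proof -
  from suff have dq: "2 * CARD('d) \<le> q" and qc: "3 * U \<le> c * real q" and ql: "4 * phi_log L U a1 q \<le> real q"
    unfolding round_suffices_def by auto
  have q0: "0 < real q" using round_suffices_pos[OF suff] by simp
  note A = reciprocal_round_bounds[OF Sa qc L0 U0 c q0] and B = reciprocal_round_bounds[OF Sb qc L0 U0 c q0]
  note l0 = phi_log_nonneg[OF L0 less_imp_le[OF U0] a1, of q, unfolded phi_log_def]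
  show ?thesis
    unfolding phi_log_def
    by (rule phiL_le[OF eps Nt_round[OF a] Nt_round[OF b] _ A(1) B(1) A(2) B(2) a1(1) ar l0])
      (use dq ql in \<open>auto simp: phi_log_def\<close>)
qed

lemma round_margin:
  fixes f :: "'c \<Rightarrow> real^'d"
  assumes eps: "eps > 0" and L0: "0 < L" and fLU: "\<forall>x\<in>Xs. L \<le> (norm (f x))\<^sup>2 \<and> (norm (f x))\<^sup>2 \<le> U"
    and c: "c > 0" and coerc: "\<forall>a<k. \<forall>v. c * real q * (norm v)\<^sup>2 \<le> v \<bullet> (Dt f k X (k * q) a *v v)"
    and Xin: "\<forall>s<k * q. X s \<in> Xs" and Zb: "\<forall>a<k. (\<Sum>s\<in>samp k (k * q) a. (Z s)\<^sup>2) \<le> 4 * real q"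
    and sig: "\<forall>a<k. 0 \<le> \<sigma>2 a \<and> \<sigma>2 a \<le> \<sigma>M"
    and suff: "round_suffices CARD('d) L U c \<sigma>M \<delta> a1 q" and a1: "0 < a1" "a1 \<le> 1"
    and x: "x \<in> Xs" and a: "a < k" and b: "b < k" and ar: "a1 \<le> ar"
  shows "2 * phiL eps f k X (k * q) ar x a b * pair_var f k X (obsY f \<beta> \<sigma>2 k X Z) (k * q) x a b < \<delta>\<^sup>2"
    and "S2 f k X (obsY f \<beta> \<sigma>2 k X Z) (k * q) a \<noteq> 0 \<Longrightarrow> 0 < pair_var f k X (obsY f \<beta> \<sigma>2 k X Z) (k * q) x a b"
proof -
  let ?Y = "obsY f \<beta> \<sigma>2 k X Z" and ?V = "pair_var f k X (obsY f \<beta> \<sigma>2 k X Z) (k * q) x a b"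
  have q0: "q > 0" by (rule round_suffices_pos[OF suff])
  have cq: "c * real q > 0" using c q0 by simp
  have U0: "U > 0" using fLU x L0 by force
  have inv: "invertible (Dt f k X (k * q) e)" if "e < k" for e
    using coerc that cq by (metis coercive_imp_posdef posdef_imp_invertible)
  have Sig: "L / (real q * U) \<le> Sig f k X (k * q) x e" "Sig f k X (k * q) x e \<le> U / (c * real q)"
    if "e < k" for e
    using Sig_round_bounds[OF that q0 L0 fLU c _ Xin x] coerc that by auto
  have Sig_pos: "0 < Sig f k X (k * q) x e" if "e < k" for e
    using Sig(1)[OF that] L0 q0 U0 by (smt (verit) divide_pos_pos mult_pos_pos of_nat_0_less_iff)
  have S2: "0 \<le> S2 f k X ?Y (k * q) e" "S2 f k X ?Y (k * q) e \<le> 8 * \<sigma>M" if "e < k" for e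
    using S2_round_le[OF that inv[OF that] round_suffices_dim[OF suff]] Zb sig that by auto
  have prod_le: "S2 f k X ?Y (k * q) e * Sig f k X (k * q) x e \<le> 8 * \<sigma>M * (U / (c * real q))" if "e < k" for e
    using S2[OF that] Sig[OF that] Sig_pos[OF that] by (intro mult_mono) auto
  have V0: "0 \<le> ?V"
    unfolding pair_var_def using S2(1)[OF a] S2(1)[OF b] Sig_pos[OF a] Sig_pos[OF b] by simp
  have "2 * phiL eps f k X (k * q) ar x a b * ?V \<le> 2 * (2 * phi_log L U a1 q) * ?V"
    using phiL_round_le[OF eps a b L0 U0 c Sig[OF a] Sig[OF b] suff a1 ar] V0
    by (intro mult_right_mono) auto
  also have "\<dots> \<le> 2 * (2 * phi_log L U a1 q) * (2 * (8 * \<sigma>M * (U / (c * real q))))"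
  proof (rule mult_left_mono)
    show "?V \<le> 2 * (8 * \<sigma>M * (U / (c * real q)))"
      unfolding pair_var_def mult_2 by (rule add_mono[OF prod_le[OF a] prod_le[OF b]])
  qed (use phi_log_nonneg[OF L0 less_imp_le[OF U0] a1] in simp)
  also have "\<dots> < \<delta>\<^sup>2"
    using suff cq unfolding round_suffices_def by (simp add: divide_less_eq mult_ac)
  finally show "2 * phiL eps f k X (k * q) ar x a b * ?V < \<delta>\<^sup>2" .
  assume "S2 f k X ?Y (k * q) a \<noteq> 0"
  then have "0 < S2 f k X ?Y (k * q) a * Sig f k X (k * q) x a"
    using S2(1)[OF a] Sig_pos[OF a] by (simp add: order_le_less)
  moreover have "0 \<le> S2 f k X ?Y (k * q) b * Sig f k X (k * q) x b"
    using S2(1)[OF b] Sig_pos[OF b] by simp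
  ultimately show "0 < ?V" unfolding pair_var_def by simp
qed

lemma stops_at_round:
  fixes f :: "'c \<Rightarrow> real^'d"
  assumes k2: "k \<ge> 2" and fin: "finite Xs" and ppos: "\<forall>x\<in>Xs. p x > 0" and psum: "(\<Sum>x\<in>Xs. p x) = 1"
    and L0: "0 < L" and fLU: "\<forall>x\<in>Xs. L \<le> (norm (f x))\<^sup>2 \<and> (norm (f x))\<^sup>2 \<le> U"
    and eps: "eps > 0" and delta: "\<delta> > 0" and al0: "0 < \<alpha>" and al1: "\<alpha> < 1"
    and c: "c > 0" and coerc: "\<forall>a<k. \<forall>v. c * real q * (norm v)\<^sup>2 \<le> v \<bullet> (Dt f k X (k * q) a *v v)"
    and Xin: "\<forall>s<k * q. X s \<in> Xs" and Zb: "\<forall>a<k. (\<Sum>s\<in>samp k (k * q) a. (Z s)\<^sup>2) \<le> 4 * real q"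
    and sig: "\<forall>a<k. 0 \<le> \<sigma>2 a \<and> \<sigma>2 a \<le> \<sigma>M"
    and suff: "round_suffices CARD('d) L U c \<sigma>M \<delta> (alphaII \<alpha> k (card Xs)) q"
  shows "t0 f k X \<le> enat (k * q)"
    and "stopII eps f Xs p \<alpha> \<delta> k X (obsY f \<beta> \<sigma>2 k X Z) (k * q)"
    and "\<forall>a<k. S2 f k X (obsY f \<beta> \<sigma>2 k X Z) (k * q) a \<noteq> 0 \<Longrightarrow>
      stopI eps f Xs p \<alpha> \<delta> k X (obsY f \<beta> \<sigma>2 k X Z) (k * q)"
proof -
  let ?Y = "obsY f \<beta> \<sigma>2 k X Z" and ?a1 = "alphaII \<alpha> k (card Xs)"
  have q0: "real q > 0" using round_suffices_pos[OF suff] by simp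
  have m1: "card Xs \<ge> 1" using fin psum by (metis card_0_eq less_one not_less sum.empty zero_neq_one)
  have a1: "0 < ?a1" "?a1 \<le> 1" using alphaII_pos[OF al0 k2] alphaII_le_1[OF al1 k2] m1 by auto
  have px: "p x \<le> 1" if "x \<in> Xs" for x
    using member_le_sum[OF that, of p] fin ppos psum by (simp add: less_imp_le)
  note margin = round_margin[OF eps L0 fLU c coerc Xin Zb sig suff a1]
  show "t0 f k X \<le> enat (k * q)"
    unfolding t0_def using coerc c q0 by (intro INF_lower) (auto intro: coercive_imp_posdef[of "c * real q"])
  have k0: "k > 0" using k2 by simp
  show "stopII eps f Xs p \<alpha> \<delta> k X ?Y (k * q)"
    using margin(1)[OF _ pihat_max(1)[OF k0] _ order_refl] by (intro stopII_if_margin[OF k2 ppos psum _ delta])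
  assume S2: "\<forall>a<k. S2 f k X ?Y (k * q) a \<noteq> 0"
  show "stopI eps f Xs p \<alpha> \<delta> k X ?Y (k * q)"
  proof (rule stopI_if_margin[OF k0 delta])
    fix x b assume x: "x \<in> Xs" and b: "b < k"
    have a: "pihat f k X ?Y (k * q) x < k" by (rule pihat_max(1)[OF k0])
    have "?a1 \<le> alphaI \<alpha> k (card Xs) p x" using alphaII_le_alphaI[OF al0 k2 m1, of p x] ppos px x by auto
    then show "0 < pair_var f k X ?Y (k * q) x (pihat f k X ?Y (k * q) x) b \<and>
      2 * phiL eps f k X (k * q) (alphaI \<alpha> k (card Xs) p x) x (pihat f k X ?Y (k * q) x) b
        * pair_var f k X ?Y (k * q) x (pihat f k X ?Y (k * q) x) b < \<delta>\<^sup>2"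
      using margin[OF x a b] S2 a by blast
  qed
qed

lemma round_suffices_if_large:
  assumes L0: "0 < L" and LU: "L \<le> U" and mu0: "0 < \<mu>" and delta: "0 < \<delta>" and sM: "0 \<le> \<sigma>M"
    and a: "0 < a" "a \<le> 1"
  defines "A \<equiv> 4 + 64 * \<sigma>M * U / (\<delta>\<^sup>2 * (\<mu> / 2))" and "B \<equiv> 2 * ln (2 * U / (L * a))"
  assumes q: "64 * A\<^sup>2 + 2 * A * B + 1 + 2 * real d + 6 * U / \<mu> \<le> real q"
  shows "round_suffices d L U (\<mu> / 2) \<sigma>M \<delta> a q"
proof -
  have U0: "0 < U" using L0 LU by simp
  have A4: "4 \<le> A" unfolding A_def using sM U0 delta mu0 by simp
  have "L * a \<le> 2 * U" using mult_mono[OF LU a(2)] L0 U0 a by simp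
  then have B0: "0 \<le> B" unfolding B_def using L0 a by (simp add: le_divide_eq)
  have extra: "0 \<le> 2 * real d + 6 * U / \<mu>" using U0 mu0 by simp
  have q1: "64 * A\<^sup>2 + 2 * A * B + 1 \<le> real q" using q extra by linarith
  have "0 \<le> 64 * A\<^sup>2 + 2 * A * B" "0 \<le> 6 * U / \<mu>" using A4 B0 U0 mu0 by simp_all
  then have "1 \<le> real q" and "2 * real d \<le> real q" and Uq: "6 * U / \<mu> \<le> real q" using q by linarith+
  then have "1 \<le> q" and dq: "2 * d \<le> q" by linarith+
  note l = phi_log_nonneg[OF L0 less_imp_le[OF U0] a] phi_log_le[OF L0 LU a \<open>1 \<le> q\<close>]
  have "A * phi_log L U a q \<le> A * (2 * ln (real q) + B)"
    unfolding B_def using l(2) A4 by (intro mult_left_mono) auto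
  then have Al: "A * phi_log L U a q < real q" using mult_log_lt[OF A4 B0 q1] by linarith
  have "4 * phi_log L U a q \<le> A * phi_log L U a q" using A4 l(1) by (rule mult_right_mono)
  then have "4 * phi_log L U a q \<le> real q" using Al by linarith
  moreover have "64 * \<sigma>M * U / (\<delta>\<^sup>2 * (\<mu> / 2)) * phi_log L U a q \<le> A * phi_log L U a q"
    unfolding A_def using l(1) by (intro mult_right_mono) auto
  then have "64 * \<sigma>M * U * phi_log L U a q / (\<delta>\<^sup>2 * (\<mu> / 2)) < real q" using Al by simp
  then have "64 * \<sigma>M * U * phi_log L U a q < \<delta>\<^sup>2 * (\<mu> / 2) * real q"
    using mu0 delta by (simp add: divide_less_eq mult.commute)
  moreover have "3 * U \<le> \<mu> / 2 * real q" using Uq mu0 by (simp add: divide_le_eq mult.commute)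
  ultimately show ?thesis unfolding round_suffices_def using dq by simp
qed

section \<open>The sampling model\<close>

abbreviation std_normal :: "real measure" where
  "std_normal \<equiv> density lborel std_normal_density"

lemma prob_space_std_normal: "prob_space std_normal"
  by (rule prob_space_normal_density) simp

lemma prob_space_sample_law: "prob_space (sample_law Ps)"
  unfolding sample_law_def by (rule prob_space_pair[OF measure_pmf.prob_space_axioms prob_space_std_normal])

lemma iid_modelD:
  assumes "iid_model M Ps W"
  shows "prob_space M" and "prob_space.indep_vars M (\<lambda>_. sample_law Ps) W UNIV"
    and "W s \<in> measurable M (sample_law Ps)" and "distr M (sample_law Ps) (W s) = sample_law Ps"
proof -
  show M: "prob_space M" and ind: "prob_space.indep_vars M (\<lambda>_. sample_law Ps) W UNIV"
    and "distr M (sample_law Ps) (W s) = sample_law Ps"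
    using assms unfolding iid_model_def by auto
  show "W s \<in> measurable M (sample_law Ps)"
    using ind unfolding prob_space.indep_vars_def[OF M] by auto
qed

lemma measurable_sample_law_fst: "(\<lambda>y. h (fst y)) \<in> borel_measurable (sample_law Ps)"
  unfolding sample_law_def by (rule measurable_compose[OF measurable_fst]) simp

lemma measurable_sample_law_snd:
  "h \<in> borel_measurable borel \<Longrightarrow> (\<lambda>y. h (snd y)) \<in> borel_measurable (sample_law Ps)"
  unfolding sample_law_def
  by (rule measurable_compose[OF measurable_snd]) (simp add: measurable_density_eq1 cong: measurable_cong_sets)

lemma measurable_iid_sample:
  "iid_model M Ps W \<Longrightarrow> g \<in> measurable (sample_law Ps) N \<Longrightarrow> (\<lambda>\<omega>. g (W s \<omega>)) \<in> measurable M N"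
  using measurable_compose[OF iid_modelD(3)] .

lemma nn_integral_iid_sample:
  assumes iid: "iid_model M Ps W" and g: "g \<in> borel_measurable (sample_law Ps)"
  shows "(\<integral>\<^sup>+\<omega>. g (W s \<omega>) \<partial>M) = (\<integral>\<^sup>+y. g y \<partial>sample_law Ps)"
proof -
  have "(\<integral>\<^sup>+y. g y \<partial>sample_law Ps) = (\<integral>\<^sup>+y. g y \<partial>distr M (sample_law Ps) (W s))"
    using iid_modelD(4)[OF iid] by simp
  also have "\<dots> = (\<integral>\<^sup>+\<omega>. g (W s \<omega>) \<partial>M)"
    by (rule nn_integral_distr[OF iid_modelD(3)[OF iid]]) (use g in simp)
  finally show ?thesis by simp
qed

lemma nn_integral_iid_prod:
  assumes iid: "iid_model M Ps W" and fin: "finite J" and g: "g \<in> borel_measurable (sample_law Ps)"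
  shows "(\<integral>\<^sup>+\<omega>. (\<Prod>s\<in>J. ennreal (g (W s \<omega>))) \<partial>M) = (\<integral>\<^sup>+y. ennreal (g y) \<partial>sample_law Ps) ^ card J"
proof -
  interpret prob_space M by (rule iid_modelD(1)[OF iid])
  have "indep_vars (\<lambda>_. sample_law Ps) W J"
    using indep_vars_subset[OF iid_modelD(2)[OF iid]] by simp
  then have "indep_vars (\<lambda>_. borel) (\<lambda>s \<omega>. ennreal (g (W s \<omega>))) J"
    by (rule indep_vars_compose2) (use g in measurable)
  then have "(\<integral>\<^sup>+\<omega>. (\<Prod>s\<in>J. ennreal (g (W s \<omega>))) \<partial>M) = (\<Prod>s\<in>J. \<integral>\<^sup>+\<omega>. ennreal (g (W s \<omega>)) \<partial>M)"
    by (rule indep_vars_nn_integral[OF fin]) simp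
  also have "\<dots> = (\<Prod>s\<in>J. \<integral>\<^sup>+y. ennreal (g y) \<partial>sample_law Ps)"
    by (intro prod.cong refl nn_integral_iid_sample[OF iid]) (use g in measurable)
  finally show ?thesis by simp
qed

lemma nn_integral_sample_law_fst:
  fixes h :: "'c \<Rightarrow> ennreal"
  shows "(\<integral>\<^sup>+y. h (fst y) \<partial>sample_law Ps) = (\<integral>\<^sup>+x. h x \<partial>Ps)"
proof -
  interpret N: prob_space std_normal by (rule prob_space_std_normal)
  have "(\<lambda>y. h (fst y)) \<in> borel_measurable (measure_pmf Ps \<Otimes>\<^sub>M std_normal)"
    by (rule measurable_compose[OF measurable_fst]) simp
  from N.nn_integral_fst[OF this] show ?thesis
    unfolding sample_law_def using N.emeasure_space_1 by simp
qed

lemma nn_integral_sample_law_snd: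
  fixes h :: "real \<Rightarrow> ennreal"
  assumes h: "h \<in> borel_measurable borel"
  shows "(\<integral>\<^sup>+y. h (snd y) \<partial>sample_law Ps) = (\<integral>\<^sup>+z. h z \<partial>std_normal)"
proof -
  interpret N: prob_space std_normal by (rule prob_space_std_normal)
  interpret P: pair_sigma_finite "measure_pmf Ps" std_normal
    by (intro pair_sigma_finite.intro prob_space_imp_sigma_finite N.prob_space_axioms
        measure_pmf.prob_space_axioms)
  have "(\<lambda>y. h (snd y)) \<in> borel_measurable (measure_pmf Ps \<Otimes>\<^sub>M std_normal)" using h by measurable
  from P.nn_integral_snd[OF this] show ?thesis
    unfolding sample_law_def by (simp add: measure_pmf.emeasure_space_1)
qed

lemma nn_integral_std_normal_exp_square:
  "(\<integral>\<^sup>+z. ennreal (exp (z\<^sup>2 / 4)) \<partial>std_normal) = ennreal (sqrt 2)"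
proof -
  \<comment> \<open>The integrand turns the standard normal density into sqrt 2 times the N(0,2) density.\<close>
  have dens: "std_normal_density z * exp (z\<^sup>2 / 4) = sqrt 2 * normal_density 0 (sqrt 2) z" for z
  proof -
    have e: "exp (- z\<^sup>2 / 2) * exp (z\<^sup>2 / 4) = exp (- z\<^sup>2 / 4)" by (simp add: exp_add[symmetric])
    have s: "sqrt (2 * pi * (sqrt 2)\<^sup>2) = sqrt 2 * sqrt (2 * pi)"
      by (simp add: real_sqrt_mult[symmetric] mult_ac)
    show ?thesis unfolding std_normal_density_def normal_density_def s using e by (simp add: field_simps)
  qed
  have "(\<integral>\<^sup>+z. ennreal (exp (z\<^sup>2 / 4)) \<partial>std_normal)
      = (\<integral>\<^sup>+z. ennreal (std_normal_density z) * ennreal (exp (z\<^sup>2 / 4)) \<partial>lborel)"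
    by (subst nn_integral_density) auto
  also have "\<dots> = (\<integral>\<^sup>+z. ennreal (sqrt 2) * ennreal (normal_density 0 (sqrt 2) z) \<partial>lborel)"
  proof (intro nn_integral_cong)
    fix z :: real
    show "ennreal (std_normal_density z) * ennreal (exp (z\<^sup>2 / 4))
        = ennreal (sqrt 2) * ennreal (normal_density 0 (sqrt 2) z)"
      using dens[of z] by (simp add: ennreal_mult[symmetric])
  qed
  also have "\<dots> = ennreal (sqrt 2) * (\<integral>\<^sup>+z. ennreal (normal_density 0 (sqrt 2) z) \<partial>lborel)"
    by (rule nn_integral_cmult) simp
  also have "(\<integral>\<^sup>+z. ennreal (normal_density 0 (sqrt 2) z) \<partial>lborel) = 1"
  proof -
    interpret N2: prob_space "density lborel (normal_density 0 (sqrt 2))"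
      by (rule prob_space_normal_density) simp
    have "emeasure (density lborel (normal_density 0 (sqrt 2))) UNIV = 1"
      using N2.emeasure_space_1 by simp
    then show ?thesis by (simp add: emeasure_density)
  qed
  finally show ?thesis by simp
qed

lemma nn_integral_pmf_exp_neg_indicator:
  assumes fin: "finite (set_pmf Ps)"
  shows "(\<integral>\<^sup>+x. ennreal (exp (- indicator {x0} x)) \<partial>Ps) \<le> ennreal (exp (- (1 - exp (-1)) * pmf Ps x0))"
proof -
  let ?S = "set_pmf Ps"
  have mass: "(\<Sum>x\<in>?S. indicator {x0} x * pmf Ps x) = pmf Ps x0"
  proof (cases "x0 \<in> ?S")
    case True
    then show ?thesis
      using fin by (simp add: indicator_def sum.delta' if_distrib[of "\<lambda>u. u * _"] cong: if_cong)
  next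
    case False
    then have "pmf Ps x0 = 0" by (simp add: set_pmf_eq)
    moreover have "(\<Sum>x\<in>?S. indicator {x0} x * pmf Ps x) = 0"
      using False by (intro sum.neutral) (auto simp: indicator_def)
    ultimately show ?thesis by simp
  qed
  have "(\<integral>\<^sup>+x. ennreal (exp (- indicator {x0} x)) \<partial>Ps) = (\<Sum>x\<in>?S. ennreal (exp (- indicator {x0} x)) * pmf Ps x)"
    by (rule nn_integral_measure_pmf_finite[OF fin]) simp
  also have "\<dots> = ennreal (\<Sum>x\<in>?S. exp (- indicator {x0} x) * pmf Ps x)"
    by (simp add: ennreal_mult[symmetric] sum_ennreal)
  also have "(\<Sum>x\<in>?S. exp (- indicator {x0} x) * pmf Ps x)
      = (\<Sum>x\<in>?S. pmf Ps x - (1 - exp (-1)) * (indicator {x0} x * pmf Ps x))"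
    by (intro sum.cong refl) (auto simp: indicator_def algebra_simps)
  also have "\<dots> = 1 - (1 - exp (-1)) * pmf Ps x0"
    by (simp add: sum_subtractf sum_distrib_left[symmetric] sum_pmf_eq_1[OF fin] mass)
  also have "\<dots> \<le> exp (- (1 - exp (-1)) * pmf Ps x0)"
    using exp_ge_add_one_self[of "- (1 - exp (-1)) * pmf Ps x0"]
    by (simp only: diff_conv_add_uminus mult_minus_left)
  finally show ?thesis by (simp add: ennreal_leI)
qed

section \<open>Tail bounds\<close>

definition visits :: "nat \<Rightarrow> nat \<Rightarrow> nat \<Rightarrow> (nat \<Rightarrow> 'c) \<Rightarrow> 'c \<Rightarrow> real" where
  "visits k t a X x0 = (\<Sum>s\<in>samp k t a. indicator {x0} (X s))"

lemma sqrt2_le_exp_half: "sqrt 2 \<le> exp (1/2::real)"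
proof -
  have "2 \<le> exp (1::real)" using exp_ge_add_one_self[of 1] by simp
  also have "exp (1::real) = (exp (1/2))\<^sup>2" by (simp add: power2_eq_square exp_add[symmetric])
  finally have "sqrt 2 \<le> sqrt ((exp (1/2::real))\<^sup>2)" by (rule real_sqrt_le_mono)
  then show ?thesis by simp
qed

lemma sum_sq_normal_tail:
  assumes iid: "iid_model M Ps W" and fin: "finite J"
  shows "emeasure M {\<omega>\<in>space M. (\<Sum>s\<in>J. (snd (W s \<omega>))\<^sup>2) \<ge> 4 * real (card J)}
          \<le> ennreal (exp (- real (card J) / 2))"
proof -
  interpret prob_space M by (rule iid_modelD(1)[OF iid])
  let ?f = "\<lambda>\<omega>. (\<Sum>s\<in>J. (snd (W s \<omega>))\<^sup>2)"
  have mf: "?f \<in> borel_measurable M"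
    by (intro borel_measurable_sum measurable_iid_sample[OF iid] measurable_sample_law_snd) auto
  have "emeasure M {\<omega>\<in>space M. ?f \<omega> \<ge> 4 * real (card J)}
      \<le> ennreal (exp (- (1/4) * (4 * real (card J)))) * (\<integral>\<^sup>+\<omega>. ennreal (exp ((1/4) * ?f \<omega>)) * indicator (space M) \<omega> \<partial>M)"
    by (rule Chernoff_ineq_nn_integral_ge) (use mf in auto)
  also have "(\<integral>\<^sup>+\<omega>. ennreal (exp ((1/4) * ?f \<omega>)) * indicator (space M) \<omega> \<partial>M)
      = (\<integral>\<^sup>+\<omega>. (\<Prod>s\<in>J. ennreal (exp ((snd (W s \<omega>))\<^sup>2 / 4))) \<partial>M)"
    by (intro nn_integral_cong) (simp add: sum_distrib_left exp_sum fin prod_ennreal)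
  also have "\<dots> = (\<integral>\<^sup>+y. ennreal (exp ((snd y)\<^sup>2 / 4)) \<partial>sample_law Ps) ^ card J"
    by (rule nn_integral_iid_prod[OF iid fin]) (rule measurable_sample_law_snd, simp)
  also have "(\<integral>\<^sup>+y. ennreal (exp ((snd y)\<^sup>2 / 4)) \<partial>sample_law Ps) = ennreal (sqrt 2)"
    using nn_integral_sample_law_snd[of "\<lambda>z. ennreal (exp (z\<^sup>2 / 4))" Ps]
      nn_integral_std_normal_exp_square by simp
  also have "ennreal (exp (- (1 / 4) * (4 * real (card J)))) * ennreal (sqrt 2) ^ card J
       = ennreal ((sqrt 2 * exp (-1)) ^ card J)"
    by (simp add: ennreal_power ennreal_mult[symmetric] power_mult_distrib exp_of_nat_mult[symmetric] mult_ac)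
  also have "\<dots> \<le> ennreal ((exp (-1/2)) ^ card J)"
  proof (intro ennreal_leI power_mono)
    have "sqrt 2 * exp (-1) \<le> exp (1/2) * exp (-1)"
      using sqrt2_le_exp_half by (intro mult_right_mono) auto
    then show "sqrt 2 * exp (-1) \<le> exp (-1/2)" by (simp add: exp_add[symmetric])
  qed simp
  also have "(exp (-1/2::real)) ^ card J = exp (- real (card J) / 2)"
    by (simp add: exp_of_nat_mult[symmetric])
  finally show ?thesis .
qed

lemma visits_lower_tail:
  assumes iid: "iid_model M Ps W" and fin: "finite J" and finS: "finite (set_pmf Ps)"
  shows "emeasure M {\<omega>\<in>space M. (\<Sum>s\<in>J. indicator {u} (fst (W s \<omega>))) \<le> real (card J) * pmf Ps u / 2}
          \<le> ennreal (exp (- real (card J) * pmf Ps u / 10))"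
proof -
  interpret prob_space M by (rule iid_modelD(1)[OF iid])
  let ?f = "\<lambda>\<omega>. (\<Sum>s\<in>J. indicator {u} (fst (W s \<omega>)) :: real)"
  let ?p = "pmf Ps u" and ?n = "real (card J)"
  have mf: "?f \<in> borel_measurable M"
    by (intro borel_measurable_sum measurable_iid_sample[OF iid] measurable_sample_law_fst)
  have "emeasure M {\<omega>\<in>space M. ?f \<omega> \<le> ?n * ?p / 2}
      \<le> ennreal (exp (1 * (?n * ?p / 2))) * (\<integral>\<^sup>+\<omega>. ennreal (exp (- 1 * ?f \<omega>)) * indicator (space M) \<omega> \<partial>M)"
    by (rule Chernoff_ineq_nn_integral_le) (use mf in auto)
  also have "(\<integral>\<^sup>+\<omega>. ennreal (exp (- 1 * ?f \<omega>)) * indicator (space M) \<omega> \<partial>M)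
      = (\<integral>\<^sup>+\<omega>. (\<Prod>s\<in>J. ennreal (exp (- indicator {u} (fst (W s \<omega>))))) \<partial>M)"
    by (intro nn_integral_cong) (simp add: exp_sum[symmetric] fin prod_ennreal sum_negf)
  also have "\<dots> = (\<integral>\<^sup>+y. ennreal (exp (- indicator {u} (fst y))) \<partial>sample_law Ps) ^ card J"
    by (rule nn_integral_iid_prod[OF iid fin measurable_sample_law_fst])
  also have "(\<integral>\<^sup>+y. ennreal (exp (- indicator {u} (fst y))) \<partial>sample_law Ps)
      = (\<integral>\<^sup>+x. ennreal (exp (- indicator {u} x)) \<partial>Ps)"
    by (rule nn_integral_sample_law_fst)
  finally have "emeasure M {\<omega>\<in>space M. ?f \<omega> \<le> ?n * ?p / 2}
      \<le> ennreal (exp (?n * ?p / 2)) * (\<integral>\<^sup>+x. ennreal (exp (- indicator {u} x)) \<partial>Ps) ^ card J"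
    by simp
  also have "\<dots> \<le> ennreal (exp (?n * ?p / 2)) * ennreal (exp (- (1 - exp (-1)) * ?p)) ^ card J"
    by (intro mult_left_mono power_mono nn_integral_pmf_exp_neg_indicator[OF finS]) auto
  also have "\<dots> = ennreal (exp (?n * ?p / 2) * exp (- (1 - exp (-1)) * ?p) ^ card J)"
    by (simp add: ennreal_power ennreal_mult[symmetric])
  also have "exp (?n * ?p / 2) * exp (- (1 - exp (-1)) * ?p) ^ card J = exp (?n * ?p * (exp (-1) - 1/2))"
    by (simp add: exp_of_nat_mult[symmetric] exp_add[symmetric] algebra_simps)
  also have "\<dots> \<le> exp (- ?n * ?p / 10)"
  proof -
    \<comment> \<open>e \<ge> 5/2 by the quadratic Taylor bound, so exp (-1) - 1/2 \<le> -1/10.\<close>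
    have "5/2 \<le> exp (1::real)" using exp_lower_Taylor_quadratic[of 1] by simp
    then have "exp (-1::real) \<le> 2/5" by (simp add: exp_minus field_simps)
    then have "?n * ?p * (exp (-1) - 1/2) \<le> ?n * ?p * (-1/10)" by (intro mult_left_mono) auto
    then show ?thesis by simp
  qed
  finally show ?thesis by (simp add: ennreal_leI)
qed

lemma context_outside_support_null:
  assumes iid: "iid_model M Ps W"
  shows "emeasure M {\<omega>\<in>space M. fst (W s \<omega>) \<notin> set_pmf Ps} = 0"
proof -
  interpret N: prob_space std_normal by (rule prob_space_std_normal)
  have A: "(- set_pmf Ps) \<times> UNIV \<in> sets (sample_law Ps)" unfolding sample_law_def by auto
  have "{\<omega>\<in>space M. fst (W s \<omega>) \<notin> set_pmf Ps} = W s -` ((- set_pmf Ps) \<times> UNIV) \<inter> space M"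
    by (auto simp: mem_Times_iff)
  also have "emeasure M \<dots> = emeasure (sample_law Ps) ((- set_pmf Ps) \<times> UNIV)"
    using emeasure_distr[OF iid_modelD(3)[OF iid] A] iid_modelD(4)[OF iid] by simp
  also have "\<dots> = emeasure Ps (- set_pmf Ps) * emeasure std_normal UNIV"
    unfolding sample_law_def by (rule N.emeasure_pair_measure_Times) auto
  also have "emeasure Ps (- set_pmf Ps) = 0"
    by (simp add: measure_pmf.emeasure_eq_measure measure_pmf_zero_iff)
  finally show ?thesis by simp
qed

section \<open>Exact fits have probability zero\<close>

text \<open>The gap between the observation at time a + r k (the (r+1)-st sample of action a) and the
  prediction of the least-squares fit to the first r samples of a, read off a sample path w.\<close>

definition fit_gap :: "('c \<Rightarrow> real^'d) \<Rightarrow> (nat \<Rightarrow> real^'d) \<Rightarrow> (nat \<Rightarrow> real) \<Rightarrow> nat \<Rightarrow> nat \<Rightarrow> nat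
    \<Rightarrow> (nat \<Rightarrow> 'c \<times> real) \<Rightarrow> real" where
  "fit_gap f \<beta> \<sigma>2 k r a w =
     (let X = \<lambda>s. fst (w s); Y = obsY f \<beta> \<sigma>2 k X (\<lambda>s. snd (w s))
      in Y (a + r * k) - f (X (a + r * k)) \<bullet> betahat f k X Y (k * r) a)"

lemma fit_gap_cong:
  assumes a: "a < k" and w: "\<And>s. s \<le> a + r * k \<Longrightarrow> w s = w' s"
  shows "fit_gap f \<beta> \<sigma>2 k r a w = fit_gap f \<beta> \<sigma>2 k r a w'"
proof -
  have "s \<le> a + r * k" if "s \<in> samp k (k * r) a" for s
    using that unfolding samp_round[OF a] by auto
  then show ?thesis
    unfolding fit_gap_def Let_def using w
    by (simp add: obsY_def cong: betahat_cong)
qed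

lemma rss_zero_imp_fit_gap_zero:
  fixes f :: "'c \<Rightarrow> real^'d"
  assumes a: "a < k" and inv: "invertible (Dt f k X (k * r) a)"
    and rss: "rss f k X (obsY f \<beta> \<sigma>2 k X Z) (k * Suc r) a = 0"
  shows "fit_gap f \<beta> \<sigma>2 k r a (\<lambda>s. (X s, Z s)) = 0"
proof -
  let ?Y = "obsY f \<beta> \<sigma>2 k X Z"
  let ?b = "betahat f k X ?Y (k * Suc r) a"
  have fit: "?Y s = f (X s) \<bullet> ?b" if "s \<in> samp k (k * Suc r) a" for s
    using rss that unfolding rss_def by (subst (asm) sum_nonneg_eq_0_iff) auto
  \<comment> \<open>The exact fit to r + 1 samples is also the least-squares fit to the first r of them.\<close>
  have "(\<Sum>s\<in>samp k (k * r) a. ?Y s *\<^sub>R f (X s)) = Dt f k X (k * r) a *v ?b"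
    using fit samp_round_Suc[OF a] by (auto simp: Dt_mult_vec intro!: sum.cong)
  then have "betahat f k X ?Y (k * r) a = ?b"
    unfolding betahat_def using matrix_inv_mult_vec(2)[OF inv] by simp
  then show ?thesis
    using fit samp_round_Suc[OF a] unfolding fit_gap_def by simp
qed

lemma measurable_path_fst:
  assumes "s \<in> I"
  shows "(\<lambda>w. h (fst (w s))) \<in> borel_measurable (PiM I (\<lambda>_. sample_law Ps))"
  using measurable_component_singleton[OF assms] measurable_sample_law_fst by (rule measurable_compose)

lemma measurable_path_snd:
  assumes "s \<in> I"
  shows "(\<lambda>w. snd (w s)) \<in> borel_measurable (PiM I (\<lambda>_. sample_law Ps))"
  using measurable_component_singleton[OF assms] measurable_sample_law_snd[of "\<lambda>z. z"]
  by (rule measurable_compose) simp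

lemma borel_measurable_fit_gap:
  fixes f :: "'c \<Rightarrow> real^'d"
  assumes a: "a < k"
  shows "fit_gap f \<beta> \<sigma>2 k r a \<in> borel_measurable (PiM {..a + r * k} (\<lambda>_. sample_law Ps))"
proof -
  let ?P = "PiM {..a + r * k} (\<lambda>_. sample_law Ps)"
  let ?X = "\<lambda>w s. fst (w s)" and ?Z = "\<lambda>w s. snd (w s)"
  let ?Y = "\<lambda>w. obsY f \<beta> \<sigma>2 k (?X w) (?Z w)"
  have S: "samp k (k * r) a \<subseteq> {..a + r * k}" unfolding samp_round[OF a] by auto
  have fm: "(\<lambda>w. f (fst (w s)) $ i) \<in> borel_measurable ?P" if "s \<in> {..a + r * k}" for s i
    using that by (rule measurable_path_fst)
  have Ym: "(\<lambda>w. ?Y w s) \<in> borel_measurable ?P" if "s \<in> {..a + r * k}" for s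
    unfolding obsY_def inner_vec_def using fm[OF that] measurable_path_snd[OF that] by measurable
  have Dm: "(\<lambda>w. Dt f k (?X w) (k * r) a $ i $ j) \<in> borel_measurable ?P" for i j
    unfolding Dt_def outer_def sum_component using fm S
    by (intro borel_measurable_sum borel_measurable_times) auto
  have cm: "(\<lambda>w. (\<Sum>s\<in>samp k (k * r) a. ?Y w s *\<^sub>R f (?X w s)) $ i) \<in> borel_measurable ?P" for i
    unfolding sum_component using fm Ym S by (intro borel_measurable_sum borel_measurable_times) auto
  have "(\<lambda>w. betahat f k (?X w) (?Y w) (k * r) a $ j) \<in> borel_measurable ?P" for j
    unfolding betahat_def by (rule borel_measurable_matrix_inv_mult_vec[OF Dm cm])
  then show ?thesis
    unfolding fit_gap_def Let_def inner_vec_def using fm Ym by measurable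
qed

lemma std_normal_singleton: "emeasure std_normal {c} = 0"
proof -
  have "AE x in lborel. x \<in> {c} \<longrightarrow> std_normal_density x = 0"
    using AE_lborel_singleton[of c] by eventually_elim simp
  then have "{c} \<in> null_sets std_normal" by (subst null_sets_density_iff) auto
  then show ?thesis by (rule null_setsD1)
qed

lemma sample_law_line_null:
  fixes h :: "'c \<Rightarrow> real"
  assumes c: "c \<noteq> 0"
  shows "(\<integral>\<^sup>+y. indicator {y. c * snd y + h (fst y) = 0} y \<partial>sample_law Ps) = 0"
proof -
  interpret N: prob_space std_normal by (rule prob_space_std_normal)
  let ?g = "\<lambda>y. indicator {y. c * snd y + h (fst y) = 0} y :: ennreal"
  have "(\<lambda>y. c * snd y + h (fst y)) \<in> borel_measurable (measure_pmf Ps \<Otimes>\<^sub>M std_normal)"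
    using measurable_sample_law_fst[of h Ps] measurable_sample_law_snd[of "\<lambda>x. c * x" Ps]
    unfolding sample_law_def by measurable
  then have "{y \<in> space (measure_pmf Ps \<Otimes>\<^sub>M std_normal). c * snd y + h (fst y) = 0}
      \<in> sets (measure_pmf Ps \<Otimes>\<^sub>M std_normal)" by measurable
  then have gm: "?g \<in> borel_measurable (measure_pmf Ps \<Otimes>\<^sub>M std_normal)"
    by (simp add: space_pair_measure)
  have "(\<integral>\<^sup>+y. ?g y \<partial>sample_law Ps) = (\<integral>\<^sup>+ x. \<integral>\<^sup>+ z. ?g (x, z) \<partial>std_normal \<partial>Ps)"
    unfolding sample_law_def using N.nn_integral_fst[OF gm] by simp
  also have "\<dots> = (\<integral>\<^sup>+ x. 0 \<partial>Ps)"
  proof (intro nn_integral_cong)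
    fix x
    have "(\<lambda>z. ?g (x, z)) = indicator {- h x / c}" using c by (auto simp: indicator_def field_simps)
    then show "(\<integral>\<^sup>+ z. ?g (x, z) \<partial>std_normal) = 0" using std_normal_singleton by simp
  qed
  finally show ?thesis by simp
qed

lemma fit_gap_null_PiM:
  fixes f :: "'c \<Rightarrow> real^'d"
  assumes a: "a < k" and sig: "\<sigma>2 a > 0"
  shows "emeasure (PiM {..a + r * k} (\<lambda>_. sample_law Ps))
      {w \<in> space (PiM {..a + r * k} (\<lambda>_. sample_law Ps)). fit_gap f \<beta> \<sigma>2 k r a w = 0} = 0"
proof -
  interpret product_sigma_finite "\<lambda>_. sample_law Ps :: ('c \<times> real) measure"
    by (intro product_sigma_finite.intro prob_space_imp_sigma_finite prob_space_sample_law)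
  define s0 where "s0 = a + r * k"
  let ?P = "PiM {..s0} (\<lambda>_. sample_law Ps)" and ?Q = "PiM {..<s0} (\<lambda>_. sample_law Ps)"
  let ?A = "{w \<in> space ?P. fit_gap f \<beta> \<sigma>2 k r a w = 0}"
  have ins: "{..s0} = insert s0 {..<s0}" by auto
  have S: "samp k (k * r) a \<subseteq> {..<s0}" unfolding s0_def samp_round[OF a] using a by auto
  have Asets: "?A \<in> sets ?P" using borel_measurable_fit_gap[OF a] unfolding s0_def by measurable
  have "emeasure ?P ?A = (\<integral>\<^sup>+w. indicator ?A w \<partial>?P)" using Asets by simp
  also have "\<dots> = (\<integral>\<^sup>+ x. (\<integral>\<^sup>+ y. indicator ?A (x(s0 := y)) \<partial>sample_law Ps) \<partial>?Q)"
    unfolding ins by (rule product_nn_integral_insert) (use Asets ins in auto)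
  also have "\<dots> = (\<integral>\<^sup>+ x. 0 \<partial>?Q)"
  proof (rule nn_integral_cong)
    fix x :: "nat \<Rightarrow> 'c \<times> real"
    let ?X = "\<lambda>s. fst (x s)"
    define h where "h x0 = f x0 \<bullet> \<beta> a - f x0 \<bullet> betahat f k ?X (obsY f \<beta> \<sigma>2 k ?X (\<lambda>s. snd (x s))) (k * r) a"
      for x0
    \<comment> \<open>Conditionally on the first r samples the gap is an affine function of the new noise.\<close>
    have "fit_gap f \<beta> \<sigma>2 k r a (x(s0 := y)) = sqrt (\<sigma>2 a) * snd y + h (fst y)" for y
    proof -
      have "s \<noteq> s0" if "s \<in> samp k (k * r) a" for s using S that by auto
      then have "betahat f k (\<lambda>s. fst ((x(s0 := y)) s)) (obsY f \<beta> \<sigma>2 k (\<lambda>s. fst ((x(s0 := y)) s)) (\<lambda>s. snd ((x(s0 := y)) s))) (k * r) a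
          = betahat f k ?X (obsY f \<beta> \<sigma>2 k ?X (\<lambda>s. snd (x s))) (k * r) a"
        by (intro betahat_cong) (simp add: obsY_def)
      moreover have "act k s0 = a" unfolding s0_def act_def using a by simp
      ultimately show ?thesis unfolding fit_gap_def Let_def h_def s0_def[symmetric] obsY_def
        by (simp add: algebra_simps)
    qed
    then have "(\<integral>\<^sup>+ y. indicator ?A (x(s0 := y)) \<partial>sample_law Ps)
        \<le> (\<integral>\<^sup>+y. indicator {y. sqrt (\<sigma>2 a) * snd y + h (fst y) = 0} y \<partial>sample_law Ps)"
      by (intro nn_integral_mono) (auto simp: indicator_def)
    also have "\<dots> = 0" by (rule sample_law_line_null) (use sig in simp)
    finally show "(\<integral>\<^sup>+ y. indicator ?A (x(s0 := y)) \<partial>sample_law Ps) = 0" by simp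
  qed
  finally show ?thesis unfolding s0_def by simp
qed

lemma fit_gap_null:
  fixes f :: "'c \<Rightarrow> real^'d"
  assumes iid: "iid_model M Ps W" and a: "a < k" and sig: "\<sigma>2 a > 0"
  shows "{\<omega> \<in> space M. fit_gap f \<beta> \<sigma>2 k r a (\<lambda>s. W s \<omega>) = 0} \<in> sets M"
    and "emeasure M {\<omega> \<in> space M. fit_gap f \<beta> \<sigma>2 k r a (\<lambda>s. W s \<omega>) = 0} = 0"
proof -
  interpret prob_space M by (rule iid_modelD(1)[OF iid])
  let ?P = "PiM {..a + r * k} (\<lambda>_. sample_law Ps)"
  let ?A = "{w \<in> space ?P. fit_gap f \<beta> \<sigma>2 k r a w = 0}"
  define Wr where "Wr \<omega> = (\<lambda>i\<in>{..a + r * k}. W i \<omega>)" for \<omega>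
  have Wm: "W i \<in> measurable M (sample_law Ps)" for i by (rule iid_modelD(3)[OF iid])
  have Wrm: "Wr \<in> measurable M ?P" unfolding Wr_def by (rule measurable_restrict) (use Wm in auto)
  have Asets: "?A \<in> sets ?P" using borel_measurable_fit_gap[OF a] by measurable
  have "fit_gap f \<beta> \<sigma>2 k r a (Wr \<omega>) = fit_gap f \<beta> \<sigma>2 k r a (\<lambda>s. W s \<omega>)" for \<omega>
    by (rule fit_gap_cong[OF a]) (simp add: Wr_def)
  then have eq: "{\<omega> \<in> space M. fit_gap f \<beta> \<sigma>2 k r a (\<lambda>s. W s \<omega>) = 0} = Wr -` ?A \<inter> space M"
    using measurable_space[OF Wrm] by auto
  show "{\<omega> \<in> space M. fit_gap f \<beta> \<sigma>2 k r a (\<lambda>s. W s \<omega>) = 0} \<in> sets M"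
    unfolding eq by (rule measurable_sets[OF Wrm Asets])
  have "indep_vars (\<lambda>_. sample_law Ps) W {..a + r * k}"
    using indep_vars_subset[OF iid_modelD(2)[OF iid]] by simp
  then have "distr M ?P Wr = (\<Pi>\<^sub>M i\<in>{..a + r * k}. distr M (sample_law Ps) (W i))"
    unfolding Wr_def by (subst (asm) indep_vars_iff_distr_eq_PiM) (use Wm in auto)
  also have "\<dots> = ?P" using iid_modelD(4)[OF iid] by simp
  finally have distr_eq: "distr M ?P Wr = ?P" .
  have "emeasure M (Wr -` ?A \<inter> space M) = emeasure (distr M ?P Wr) ?A"
    by (rule emeasure_distr[OF Wrm Asets, symmetric])
  then show "emeasure M {\<omega> \<in> space M. fit_gap f \<beta> \<sigma>2 k r a (\<lambda>s. W s \<omega>) = 0} = 0"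
    unfolding eq distr_eq using fit_gap_null_PiM[of a k \<sigma>2 r Ps f \<beta>] a sig by simp
qed

section \<open>Good rounds\<close>

text \<open>After a good round r both rules have stopped by time k (r + 1) (good_round_stops), and round r
  is bad with probability O(k m exp (- r p_min / 10)), p_min the smallest context probability
  (bad_round_event).\<close>

definition good_round :: "'c pmf \<Rightarrow> ('c \<Rightarrow> real^'d) \<Rightarrow> (nat \<Rightarrow> real^'d) \<Rightarrow> (nat \<Rightarrow> real) \<Rightarrow> nat
    \<Rightarrow> (nat \<Rightarrow> 'c) \<Rightarrow> (nat \<Rightarrow> real) \<Rightarrow> nat \<Rightarrow> bool" where
  "good_round Ps f \<beta> \<sigma>2 k X Z r \<longleftrightarrow>
     (\<forall>a<k. \<forall>x0\<in>set_pmf Ps. real r * pmf Ps x0 / 2 < visits k (k * r) a X x0) \<and>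
     (\<forall>a<k. \<forall>x0\<in>set_pmf Ps. real (Suc r) * pmf Ps x0 / 2 < visits k (k * Suc r) a X x0) \<and>
     (\<forall>s<k * Suc r. X s \<in> set_pmf Ps) \<and>
     (\<forall>a<k. (\<Sum>s\<in>samp k (k * Suc r) a. (Z s)\<^sup>2) < 4 * real (Suc r)) \<and>
     (\<forall>a<k. fit_gap f \<beta> \<sigma>2 k r a (\<lambda>s. (X s, Z s)) \<noteq> 0)"

lemma expectation_outer_quadratic_form:
  fixes f :: "'c \<Rightarrow> real^'d"
  assumes fin: "finite (set_pmf Ps)"
  shows "v \<bullet> (measure_pmf.expectation Ps (\<lambda>x. outer (f x)) *v v) = (\<Sum>x0\<in>set_pmf Ps. pmf Ps x0 * (f x0 \<bullet> v)\<^sup>2)"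
proof -
  have "measure_pmf.expectation Ps (\<lambda>x. outer (f x)) = (\<Sum>x0\<in>set_pmf Ps. pmf Ps x0 *\<^sub>R outer (f x0))"
    by (rule integral_measure_pmf[OF fin]) auto
  then show ?thesis
    by (simp add: sum_matrix_vector_mult scaleR_matrix_vector_assoc[symmetric] outer_mult_vec inner_sum_right
        power2_eq_square mult_ac inner_commute)
qed

lemma Dt_coercive_if_visits:
  fixes f :: "'c \<Rightarrow> real^'d"
  assumes fin: "finite (set_pmf Ps)"
    and mu: "\<forall>v. \<mu> * (norm v)\<^sup>2 \<le> v \<bullet> (measure_pmf.expectation Ps (\<lambda>x. outer (f x)) *v v)"
    and cnt: "\<forall>x0\<in>set_pmf Ps. real q * pmf Ps x0 / 2 \<le> visits k t a X x0"
  shows "\<mu> / 2 * real q * (norm v)\<^sup>2 \<le> v \<bullet> (Dt f k X t a *v v)"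
proof -
  let ?S = "samp k t a" and ?P = "set_pmf Ps"
  have "\<mu> * (norm v)\<^sup>2 \<le> (\<Sum>x0\<in>?P. pmf Ps x0 * (f x0 \<bullet> v)\<^sup>2)"
    using mu[rule_format, of v] expectation_outer_quadratic_form[OF fin, where f=f and v=v] by simp
  then have "real q / 2 * (\<mu> * (norm v)\<^sup>2) \<le> real q / 2 * (\<Sum>x0\<in>?P. pmf Ps x0 * (f x0 \<bullet> v)\<^sup>2)"
    by (rule mult_left_mono) simp
  then have "\<mu> / 2 * real q * (norm v)\<^sup>2 \<le> real q / 2 * (\<Sum>x0\<in>?P. pmf Ps x0 * (f x0 \<bullet> v)\<^sup>2)"
    by (simp add: mult_ac)
  also have "\<dots> \<le> (\<Sum>x0\<in>?P. visits k t a X x0 * (f x0 \<bullet> v)\<^sup>2)"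
    unfolding sum_distrib_left
  proof (rule sum_mono)
    fix x0 assume "x0 \<in> ?P"
    then have "real q * pmf Ps x0 / 2 * (f x0 \<bullet> v)\<^sup>2 \<le> visits k t a X x0 * (f x0 \<bullet> v)\<^sup>2"
      using cnt by (intro mult_right_mono) auto
    then show "real q / 2 * (pmf Ps x0 * (f x0 \<bullet> v)\<^sup>2) \<le> visits k t a X x0 * (f x0 \<bullet> v)\<^sup>2"
      by (simp add: mult_ac)
  qed
  also have "\<dots> = (\<Sum>s\<in>?S. \<Sum>x0\<in>?P. indicator {x0} (X s) * (f x0 \<bullet> v)\<^sup>2)"
    unfolding visits_def by (simp add: sum_distrib_right sum.swap[of _ ?P])
  also have "\<dots> \<le> (\<Sum>s\<in>?S. (f (X s) \<bullet> v)\<^sup>2)"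
  proof (rule sum_mono)
    fix s
    have "(\<Sum>x0\<in>?P. indicator {x0} (X s) * (f x0 \<bullet> v)\<^sup>2) = (if X s \<in> ?P then (f (X s) \<bullet> v)\<^sup>2 else 0)"
      using fin by (simp add: indicator_def if_distrib[of "\<lambda>u. u * _"] sum.delta cong: if_cong)
    then show "(\<Sum>x0\<in>?P. indicator {x0} (X s) * (f x0 \<bullet> v)\<^sup>2) \<le> (f (X s) \<bullet> v)\<^sup>2" by simp
  qed
  finally show ?thesis by (simp add: Dt_quadratic_form)
qed

lemma good_round_stops:
  fixes f :: "'c \<Rightarrow> real^'d"
  assumes k2: "k \<ge> 2" and fin: "finite Xs" and ppos: "\<forall>x\<in>Xs. p x > 0" and psum: "(\<Sum>x\<in>Xs. p x) = 1"
    and PX: "set_pmf Ps \<subseteq> Xs"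
    and L0: "0 < L" and fLU: "\<forall>x\<in>Xs. L \<le> (norm (f x))\<^sup>2 \<and> (norm (f x))\<^sup>2 \<le> U"
    and eps: "eps > 0" and delta: "\<delta> > 0" and al0: "0 < \<alpha>" and al1: "\<alpha> < 1"
    and mu0: "\<mu> > 0" and mu: "\<forall>v. \<mu> * (norm v)\<^sup>2 \<le> v \<bullet> (measure_pmf.expectation Ps (\<lambda>x. outer (f x)) *v v)"
    and sig: "\<forall>a<k. 0 < \<sigma>2 a \<and> \<sigma>2 a \<le> \<sigma>M" and r1: "r \<ge> 1"
    and suff: "round_suffices CARD('d) L U (\<mu> / 2) \<sigma>M \<delta> (alphaII \<alpha> k (card Xs)) (Suc r)"
    and good: "good_round Ps f \<beta> \<sigma>2 k X Z r"
  shows "tauI eps f Xs p \<alpha> \<delta> k X (obsY f \<beta> \<sigma>2 k X Z) \<le> enat (k * Suc r)"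
    and "tauII eps f Xs p \<alpha> \<delta> k X (obsY f \<beta> \<sigma>2 k X Z) \<le> enat (k * Suc r)"
proof -
  let ?Y = "obsY f \<beta> \<sigma>2 k X Z"
  have finP: "finite (set_pmf Ps)" using PX fin by (rule finite_subset)
  note good = good[unfolded good_round_def]
  have coerc: "\<forall>a<k. \<forall>v. \<mu> / 2 * real q * (norm v)\<^sup>2 \<le> v \<bullet> (Dt f k X (k * q) a *v v)"
    if cnt: "\<forall>a<k. \<forall>x0\<in>set_pmf Ps. real q * pmf Ps x0 / 2 < visits k (k * q) a X x0" for q
  proof (intro allI impI)
    fix a v assume "a < k"
    then show "\<mu> / 2 * real q * (norm v)\<^sup>2 \<le> v \<bullet> (Dt f k X (k * q) a *v v)"
      using cnt by (intro Dt_coercive_if_visits[OF finP mu]) (auto intro: less_imp_le)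
  qed
  have Xin: "\<forall>s<k * Suc r. X s \<in> Xs" using good PX by auto
  have Zb: "\<forall>a<k. (\<Sum>s\<in>samp k (k * Suc r) a. (Z s)\<^sup>2) \<le> 4 * real (Suc r)" using good by (simp add: less_imp_le)
  have sig': "\<forall>a<k. 0 \<le> \<sigma>2 a \<and> \<sigma>2 a \<le> \<sigma>M" using sig by (simp add: less_imp_le)
  note st = stops_at_round[OF k2 fin ppos psum L0 fLU eps delta al0 al1 _ coerc Xin Zb sig' suff]
  have S2: "S2 f k X ?Y (k * Suc r) a \<noteq> 0" if a: "a < k" for a
  proof
    assume S2: "S2 f k X ?Y (k * Suc r) a = 0"
    have "real (Nt k (k * Suc r) a) - real CARD('d) > 0"
      using suff Nt_round[OF a, of "Suc r"] by (simp add: round_suffices_def)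
    then have "rss f k X ?Y (k * Suc r) a = 0" using S2 by (simp add: S2_rss)
    moreover have "invertible (Dt f k X (k * r) a)"
      using coerc[of r] good a mu0 r1
      by (intro posdef_imp_invertible coercive_imp_posdef[of "\<mu> / 2 * real r"]) auto
    ultimately show False using rss_zero_imp_fit_gap_zero[OF a] good a by blast
  qed
  show "tauI eps f Xs p \<alpha> \<delta> k X ?Y \<le> enat (k * Suc r)"
    unfolding tauI_def using st good mu0 S2 by (intro INF_lower) auto
  show "tauII eps f Xs p \<alpha> \<delta> k X ?Y \<le> enat (k * Suc r)"
    unfolding tauII_def using st good mu0 by (intro INF_lower) auto
qed

lemma visits_deficit_event:
  fixes k q :: nat
  assumes iid: "iid_model M Ps W" and finP: "finite (set_pmf Ps)"
    and pmin: "\<forall>x0\<in>set_pmf Ps. pm \<le> pmf Ps x0"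
  defines "B \<equiv> {\<omega> \<in> space M. \<exists>a<k. \<exists>x0\<in>set_pmf Ps.
      visits k (k * q) a (\<lambda>s. fst (W s \<omega>)) x0 \<le> real q * pmf Ps x0 / 2}"
  shows "B \<in> sets M"
    and "emeasure M B \<le> ennreal (real k * real (card (set_pmf Ps)) * exp (- real q * pm / 10))"
proof -
  interpret prob_space M by (rule iid_modelD(1)[OF iid])
  let ?A = "\<lambda>a x0. {\<omega> \<in> space M. visits k (k * q) a (\<lambda>s. fst (W s \<omega>)) x0 \<le> real q * pmf Ps x0 / 2}"
  have eq: "B = (\<Union>a\<in>{..<k}. \<Union>x0\<in>set_pmf Ps. ?A a x0)" unfolding B_def by auto
  have mA: "?A a x0 \<in> sets M" for a x0
  proof -
    have "(\<lambda>\<omega>. visits k (k * q) a (\<lambda>s. fst (W s \<omega>)) x0) \<in> borel_measurable M"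
      unfolding visits_def by (intro borel_measurable_sum measurable_iid_sample[OF iid] measurable_sample_law_fst)
    then show ?thesis by measurable
  qed
  have mU: "(\<Union>x0\<in>set_pmf Ps. ?A a x0) \<in> sets M" for a using mA finP by blast
  show "B \<in> sets M" unfolding eq using mU by blast
  have one: "emeasure M (?A a x0) \<le> ennreal (exp (- real q * pm / 10))"
    if a: "a < k" and x0: "x0 \<in> set_pmf Ps" for a x0
  proof -
    have "emeasure M (?A a x0) \<le> ennreal (exp (- real q * pmf Ps x0 / 10))"
      using visits_lower_tail[OF iid finite_samp[of k "k * q" a] finP, where u=x0] card_samp_round[OF a]
      unfolding visits_def by simp
    also have "\<dots> \<le> ennreal (exp (- real q * pm / 10))"
      using pmin x0 by (intro ennreal_leI) (auto intro!: mult_left_mono)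
    finally show ?thesis .
  qed
  have "emeasure M B \<le> (\<Sum>a\<in>{..<k}. emeasure M (\<Union>x0\<in>set_pmf Ps. ?A a x0))"
    unfolding eq by (rule emeasure_subadditive_finite) (use mU in auto)
  also have "\<dots> \<le> (\<Sum>a\<in>{..<k}. \<Sum>x0\<in>set_pmf Ps. emeasure M (?A a x0))"
    by (intro sum_mono emeasure_subadditive_finite finP) (use mA in auto)
  also have "\<dots> \<le> (\<Sum>a\<in>{..<k}. \<Sum>x0\<in>set_pmf Ps. ennreal (exp (- real q * pm / 10)))"
    by (intro sum_mono one) auto
  also have "\<dots> = ennreal (real k * real (card (set_pmf Ps)) * exp (- real q * pm / 10))"
    by (simp add: ennreal_mult ennreal_of_nat_eq_real_of_nat mult_ac)
  finally show "emeasure M B \<le> ennreal (real k * real (card (set_pmf Ps)) * exp (- real q * pm / 10))" .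
qed

lemma outside_support_event:
  fixes n :: nat
  assumes iid: "iid_model M Ps W"
  defines "B \<equiv> {\<omega> \<in> space M. \<exists>s<n. fst (W s \<omega>) \<notin> set_pmf Ps}"
  shows "B \<in> sets M"
    and "emeasure M B = 0"
proof -
  interpret prob_space M by (rule iid_modelD(1)[OF iid])
  let ?A = "\<lambda>s. {\<omega> \<in> space M. fst (W s \<omega>) \<notin> set_pmf Ps}"
  have eq: "B = (\<Union>s\<in>{..<n}. ?A s)" unfolding B_def by auto
  have m: "?A s \<in> sets M" for s
  proof -
    have "(\<lambda>\<omega>. indicator (- set_pmf Ps) (fst (W s \<omega>)) :: real) \<in> borel_measurable M"
      by (intro measurable_iid_sample[OF iid] measurable_sample_law_fst)
    then have "{\<omega> \<in> space M. (indicator (- set_pmf Ps) (fst (W s \<omega>)) :: real) = 1} \<in> sets M" by measurable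
    then show ?thesis by (simp add: indicator_def)
  qed
  show "B \<in> sets M" unfolding eq using m by blast
  have "emeasure M B \<le> (\<Sum>s\<in>{..<n}. emeasure M (?A s))"
    unfolding eq by (rule emeasure_subadditive_finite) (use m in auto)
  also have "\<dots> = 0" using context_outside_support_null[OF iid] by simp
  finally show "emeasure M B = 0" by simp
qed

lemma noise_energy_event:
  fixes k q :: nat
  assumes iid: "iid_model M Ps W"
  defines "B \<equiv> {\<omega> \<in> space M. \<exists>a<k. 4 * real q \<le> (\<Sum>s\<in>samp k (k * q) a. (snd (W s \<omega>))\<^sup>2)}"
  shows "B \<in> sets M"
    and "emeasure M B \<le> ennreal (real k * exp (- real q / 2))"
proof -
  interpret prob_space M by (rule iid_modelD(1)[OF iid])
  let ?A = "\<lambda>a. {\<omega> \<in> space M. 4 * real q \<le> (\<Sum>s\<in>samp k (k * q) a. (snd (W s \<omega>))\<^sup>2)}"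
  have eq: "B = (\<Union>a\<in>{..<k}. ?A a)" unfolding B_def by auto
  have m: "?A a \<in> sets M" for a
  proof -
    have "(\<lambda>\<omega>. (\<Sum>s\<in>samp k (k * q) a. (snd (W s \<omega>))\<^sup>2)) \<in> borel_measurable M"
      by (intro borel_measurable_sum measurable_iid_sample[OF iid] measurable_sample_law_snd) auto
    then show ?thesis by measurable
  qed
  show "B \<in> sets M" unfolding eq using m by blast
  have "emeasure M B \<le> (\<Sum>a\<in>{..<k}. emeasure M (?A a))"
    unfolding eq by (rule emeasure_subadditive_finite) (use m in auto)
  also have "\<dots> \<le> (\<Sum>a\<in>{..<k}. ennreal (exp (- real q / 2)))"
  proof (intro sum_mono)
    fix a assume "a \<in> {..<k}"
    then show "emeasure M (?A a) \<le> ennreal (exp (- real q / 2))"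
      using sum_sq_normal_tail[OF iid finite_samp[of k "k * q" a]] card_samp_round[of a k q] by simp
  qed
  also have "\<dots> = ennreal (real k * exp (- real q / 2))"
    by (simp add: ennreal_mult ennreal_of_nat_eq_real_of_nat)
  finally show "emeasure M B \<le> ennreal (real k * exp (- real q / 2))" .
qed

lemma exact_fit_event:
  fixes f :: "'c \<Rightarrow> real^'d" and \<beta> :: "nat \<Rightarrow> real^'d" and k r :: nat
  assumes iid: "iid_model M Ps W" and sig: "\<forall>a<k. \<sigma>2 a > 0"
  defines "B \<equiv> {\<omega> \<in> space M. \<exists>a<k. fit_gap f \<beta> \<sigma>2 k r a (\<lambda>s. W s \<omega>) = 0}"
  shows "B \<in> sets M"
    and "emeasure M B = 0"
proof -
  interpret prob_space M by (rule iid_modelD(1)[OF iid])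
  let ?A = "\<lambda>a. {\<omega> \<in> space M. fit_gap f \<beta> \<sigma>2 k r a (\<lambda>s. W s \<omega>) = 0}"
  have eq: "B = (\<Union>a\<in>{..<k}. ?A a)" unfolding B_def by auto
  have m: "?A a \<in> sets M" if "a < k" for a
    by (rule fit_gap_null(1)[OF iid that]) (use sig that in auto)
  have null: "emeasure M (?A a) = 0" if "a < k" for a
    by (rule fit_gap_null(2)[OF iid that]) (use sig that in auto)
  show "B \<in> sets M" unfolding eq using m by blast
  have "emeasure M B \<le> (\<Sum>a\<in>{..<k}. emeasure M (?A a))"
    unfolding eq by (rule emeasure_subadditive_finite) (use m in auto)
  also have "\<dots> = 0" using null by simp
  finally show "emeasure M B = 0" by simp
qed

lemma bad_round_event:
  fixes f :: "'c \<Rightarrow> real^'d" and \<beta> :: "nat \<Rightarrow> real^'d" and k r :: nat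
  assumes iid: "iid_model M Ps W" and finP: "finite (set_pmf Ps)"
    and pmin: "\<forall>x0\<in>set_pmf Ps. pm \<le> pmf Ps x0" and pm0: "0 < pm" and pm1: "pm \<le> 1"
    and sig: "\<forall>a<k. \<sigma>2 a > 0"
  defines "B \<equiv> {\<omega> \<in> space M. \<not> good_round Ps f \<beta> \<sigma>2 k (\<lambda>s. fst (W s \<omega>)) (\<lambda>s. snd (W s \<omega>)) r}"
  shows "B \<in> sets M"
    and "emeasure M B \<le> ennreal (real k * (2 * real (card (set_pmf Ps)) + 1) * exp (- real r * pm / 10))"
proof -
  interpret prob_space M by (rule iid_modelD(1)[OF iid])
  note B1 = visits_deficit_event[OF iid finP pmin, of k r]
    and B1' = visits_deficit_event[OF iid finP pmin, of k "Suc r"]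
    and B2 = outside_support_event[OF iid, of "k * Suc r"]
    and B3 = noise_energy_event[OF iid, of k "Suc r"]
    and B4 = exact_fit_event[OF iid sig, of f \<beta> r]
  let ?m = "real (card (set_pmf Ps))" and ?e = "exp (- real r * pm / 10)"
  have eq: "B = {\<omega> \<in> space M. \<exists>a<k. \<exists>x0\<in>set_pmf Ps. visits k (k * r) a (\<lambda>s. fst (W s \<omega>)) x0 \<le> real r * pmf Ps x0 / 2}
    \<union> {\<omega> \<in> space M. \<exists>a<k. \<exists>x0\<in>set_pmf Ps. visits k (k * Suc r) a (\<lambda>s. fst (W s \<omega>)) x0 \<le> real (Suc r) * pmf Ps x0 / 2}
    \<union> {\<omega> \<in> space M. \<exists>s<k * Suc r. fst (W s \<omega>) \<notin> set_pmf Ps}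
    \<union> {\<omega> \<in> space M. \<exists>a<k. 4 * real (Suc r) \<le> (\<Sum>s\<in>samp k (k * Suc r) a. (snd (W s \<omega>))\<^sup>2)}
    \<union> {\<omega> \<in> space M. \<exists>a<k. fit_gap f \<beta> \<sigma>2 k r a (\<lambda>s. W s \<omega>) = 0}" (is "B = ?B1 \<union> ?B1' \<union> ?B2 \<union> ?B3 \<union> ?B4")
    unfolding B_def good_round_def by (auto simp: not_less)
  note sets = B1(1) B1'(1) B2(1) B3(1) B4(1)
  show "B \<in> sets M" unfolding eq by (intro sets.Un sets)
  have sub: "emeasure M (X \<union> Y) \<le> emeasure M X + emeasure M Y" if "X \<in> sets M" "Y \<in> sets M" for X Y
    using emeasure_subadditive[OF that] .
  have "emeasure M B \<le> emeasure M (?B1 \<union> ?B1' \<union> ?B2 \<union> ?B3) + emeasure M ?B4"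
    unfolding eq by (rule sub) (intro sets.Un sets)+
  also have "emeasure M (?B1 \<union> ?B1' \<union> ?B2 \<union> ?B3) \<le> emeasure M (?B1 \<union> ?B1' \<union> ?B2) + emeasure M ?B3"
    by (rule sub) (intro sets.Un sets)+
  also have "emeasure M (?B1 \<union> ?B1' \<union> ?B2) \<le> emeasure M (?B1 \<union> ?B1') + emeasure M ?B2"
    by (rule sub) (intro sets.Un sets)+
  also have "emeasure M (?B1 \<union> ?B1') \<le> emeasure M ?B1 + emeasure M ?B1'"
    by (rule sub) (intro sets.Un sets)+
  finally have "emeasure M B \<le> emeasure M ?B1 + emeasure M ?B1' + emeasure M ?B2 + emeasure M ?B3 + emeasure M ?B4"
    by (simp add: add_mono add.assoc)
  also have "\<dots> \<le> ennreal (real k * ?m * ?e) + ennreal (real k * ?m * ?e) + 0 + ennreal (real k * ?e) + 0"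
  proof (intro add_mono)
    show "emeasure M ?B1 \<le> ennreal (real k * ?m * ?e)" using B1(2) by simp
    have "exp (- real (Suc r) * pm / 10) \<le> ?e" using pm0 by (simp add: algebra_simps)
    then have "ennreal (real k * ?m * exp (- real (Suc r) * pm / 10)) \<le> ennreal (real k * ?m * ?e)"
      by (intro ennreal_leI mult_left_mono) auto
    with B1'(2) show "emeasure M ?B1' \<le> ennreal (real k * ?m * ?e)" by (rule order_trans)
    have "pm * real r \<le> real r" using mult_left_le_one_le[OF _ _ pm1, of "real r"] pm0 by simp
    then have "real r * pm / 10 \<le> real (Suc r) / 2" by (simp add: mult.commute)
    then have "ennreal (real k * exp (- real (Suc r) / 2)) \<le> ennreal (real k * ?e)"
      by (intro ennreal_leI mult_left_mono) auto
    with B3(2) show "emeasure M ?B3 \<le> ennreal (real k * ?e)" by (rule order_trans)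
  qed (use B2(2) B4(2) in simp_all)
  also have "\<dots> = ennreal (real k * (2 * ?m + 1) * ?e)"
    by (simp add: ennreal_plus[symmetric] algebra_simps del: ennreal_plus)
  finally show "emeasure M B \<le> ennreal (real k * (2 * ?m + 1) * ?e)" .
qed

section \<open>Expected stopping times\<close>

lemma of_nat_le_suminf_ennreal:
  fixes g :: "nat \<Rightarrow> ennreal"
  assumes "\<And>j. j < n \<Longrightarrow> 1 \<le> g j"
  shows "of_nat n \<le> (\<Sum>j. g j)"
proof -
  have "of_nat n = (\<Sum>j<n. 1 :: ennreal)" by simp
  also have "\<dots> \<le> (\<Sum>j<n. g j)" using assms by (intro sum_mono) auto
  also have "\<dots> \<le> (\<Sum>j. g j)" by (intro sum_le_suminf summableI) auto
  finally show ?thesis .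
qed

lemma enat_le_escape_count:
  fixes \<tau> :: enat and B :: "nat \<Rightarrow> 'a set"
  assumes k: "k > 0" and esc: "\<And>j. x \<notin> B j \<Longrightarrow> \<tau> \<le> enat (k * (N + j))"
  shows "ennreal_of_enat \<tau> \<le> of_nat (k * N) + of_nat k * (\<Sum>j. indicator (B j) x)"
proof (cases "\<exists>j. x \<notin> B j")
  case True
  define j0 where "j0 = (LEAST j. x \<notin> B j)"
  have j0: "x \<notin> B j0" unfolding j0_def using True by (rule LeastI_ex)
  have below: "x \<in> B j" if "j < j0" for j using not_less_Least[OF that[unfolded j0_def]] by blast
  have "ennreal_of_enat \<tau> \<le> ennreal_of_enat (enat (k * (N + j0)))"
    using esc[OF j0] by (simp only: ennreal_of_enat_le_iff)
  also have "\<dots> = of_nat (k * N) + of_nat k * of_nat j0" by (simp add: algebra_simps)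
  also have "of_nat j0 \<le> (\<Sum>j. indicator (B j) x :: ennreal)"
    by (rule of_nat_le_suminf_ennreal) (use below in auto)
  finally show ?thesis by (simp add: add_left_mono mult_left_mono)
next
  case False
  have "of_nat n \<le> (\<Sum>j. indicator (B j) x :: ennreal)" for n
    by (rule of_nat_le_suminf_ennreal) (use False in auto)
  then have "(\<Sum>j. indicator (B j) x :: ennreal) = top"
    using ennreal_SUP_of_nat_eq_top top_unique by (metis SUP_least)
  then show ?thesis using k by (simp add: ennreal_mult_eq_top_iff)
qed

lemma nn_integral_le_geometric_tail:
  fixes T :: "'a \<Rightarrow> enat" and B :: "nat \<Rightarrow> 'a set"
  assumes M: "prob_space M" and k: "k > 0" and Bsets: "\<And>q. B q \<in> sets M"
    and Bmeas: "\<And>q. emeasure M (B q) \<le> ennreal (K * \<rho> ^ q)" and K: "0 \<le> K" and \<rho>: "0 < \<rho>" "\<rho> < 1"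
    and T: "\<And>\<omega> q. \<omega> \<in> space M \<Longrightarrow> Q \<le> q \<Longrightarrow> \<omega> \<notin> B q \<Longrightarrow> T \<omega> \<le> enat (k * Suc q)"
  shows "(\<integral>\<^sup>+\<omega>. ennreal_of_enat (T \<omega>) \<partial>M) \<le> ennreal (real k * real (Suc Q) + real k * K * \<rho> ^ Q / (1 - \<rho>))"
proof -
  interpret prob_space M by (rule M)
  have "(\<integral>\<^sup>+\<omega>. ennreal_of_enat (T \<omega>) \<partial>M)
      \<le> (\<integral>\<^sup>+\<omega>. of_nat (k * Suc Q) + of_nat k * (\<Sum>j. indicator (B (Q + j)) \<omega>) \<partial>M)"
    by (intro nn_integral_mono enat_le_escape_count[OF k]) (use T in auto)
  also have "\<dots> = of_nat (k * Suc Q) + of_nat k * (\<Sum>j. emeasure M (B (Q + j)))"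
    using Bsets by (simp add: nn_integral_add nn_integral_cmult nn_integral_suminf emeasure_space_1)
  also have "\<dots> \<le> of_nat (k * Suc Q) + of_nat k * ennreal (K * \<rho> ^ Q / (1 - \<rho>))"
  proof -
    have "(\<Sum>j. emeasure M (B (Q + j))) \<le> (\<Sum>j. ennreal (K * \<rho> ^ Q * \<rho> ^ j))"
    proof (intro suminf_le)
      fix j
      show "emeasure M (B (Q + j)) \<le> ennreal (K * \<rho> ^ Q * \<rho> ^ j)"
        using Bmeas[of "Q + j"] by (simp add: power_add mult.assoc)
    qed auto
    also have "(\<lambda>j. K * \<rho> ^ Q * \<rho> ^ j) sums (K * \<rho> ^ Q * (1 / (1 - \<rho>)))"
      using \<rho> by (intro sums_mult geometric_sums) auto
    then have "(\<Sum>j. ennreal (K * \<rho> ^ Q * \<rho> ^ j)) = ennreal (K * \<rho> ^ Q / (1 - \<rho>))"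
      using K \<rho> by (simp add: suminf_ennreal2 sums_unique[symmetric] sums_summable)
    finally show ?thesis by (intro add_left_mono mult_left_mono) auto
  qed
  also have "\<dots> = ennreal (real k * real (Suc Q) + real k * K * \<rho> ^ Q / (1 - \<rho>))"
    using K \<rho> by (simp add: ennreal_plus[symmetric] ennreal_mult[symmetric] ennreal_of_nat_eq_real_of_nat
        mult.assoc distrib_left del: ennreal_plus)
  finally show ?thesis .
qed

lemma expected_stopping_times_le:
  fixes f :: "'c \<Rightarrow> real^'d" and W :: "nat \<Rightarrow> 'm \<Rightarrow> 'c \<times> real"
  assumes k2: "k \<ge> 2" and fin: "finite Xs" and ppos: "\<forall>x\<in>Xs. p x > 0" and psum: "(\<Sum>x\<in>Xs. p x) = 1"
    and PX: "set_pmf Ps \<subseteq> Xs"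
    and L0: "0 < L" and fLU: "\<forall>x\<in>Xs. L \<le> (norm (f x))\<^sup>2 \<and> (norm (f x))\<^sup>2 \<le> U"
    and eps: "eps > 0" and delta: "\<delta> > 0" and al0: "0 < \<alpha>" and al1: "\<alpha> < 1"
    and mu0: "\<mu> > 0" and mu: "\<forall>v. \<mu> * (norm v)\<^sup>2 \<le> v \<bullet> (measure_pmf.expectation Ps (\<lambda>x. outer (f x)) *v v)"
    and sig: "\<forall>a<k. 0 < \<sigma>2 a \<and> \<sigma>2 a \<le> \<sigma>M"
    and pmin: "\<forall>x0\<in>set_pmf Ps. pm \<le> pmf Ps x0" and pm0: "0 < pm" and pm1: "pm \<le> 1"
    and iid: "iid_model M Ps W" and Q1: "1 \<le> Q"
    and suff: "\<And>q. Q \<le> q \<Longrightarrow> round_suffices CARD('d) L U (\<mu> / 2) \<sigma>M \<delta> (alphaII \<alpha> k (card Xs)) (Suc q)"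
  defines "bound \<equiv> real k * real (Suc Q)
    + real k * (real k * (2 * real (card (set_pmf Ps)) + 1)) * exp (- pm / 10) ^ Q / (1 - exp (- pm / 10))"
  shows "ETI M W eps f Xs p \<beta> \<sigma>2 \<alpha> \<delta> k \<le> ennreal bound"
    and "ETII M W eps f Xs p \<beta> \<sigma>2 \<alpha> \<delta> k \<le> ennreal bound"
proof -
  interpret prob_space M by (rule iid_modelD(1)[OF iid])
  have finP: "finite (set_pmf Ps)" using PX fin by (rule finite_subset)
  let ?X = "\<lambda>\<omega> s. fst (W s \<omega>)" and ?Z = "\<lambda>\<omega> s. snd (W s \<omega>)"
  let ?K = "real k * (2 * real (card (set_pmf Ps)) + 1)" and ?\<rho> = "exp (- pm / 10)"
  define B where "B q = {\<omega> \<in> space M. \<not> good_round Ps f \<beta> \<sigma>2 k (?X \<omega>) (?Z \<omega>) q}" for q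
  have sig0: "\<forall>a<k. 0 < \<sigma>2 a" using sig by simp
  note bad = bad_round_event[OF iid finP pmin pm0 pm1 sig0, where f=f and \<beta>=\<beta>, folded B_def]
  have Bmeas: "emeasure M (B q) \<le> ennreal (?K * ?\<rho> ^ q)" for q
    using bad(2)[of q] by (simp add: exp_of_nat_mult[symmetric] mult.assoc)
  have stops: "tauI eps f Xs p \<alpha> \<delta> k (?X \<omega>) (obsY f \<beta> \<sigma>2 k (?X \<omega>) (?Z \<omega>)) \<le> enat (k * Suc q)
      \<and> tauII eps f Xs p \<alpha> \<delta> k (?X \<omega>) (obsY f \<beta> \<sigma>2 k (?X \<omega>) (?Z \<omega>)) \<le> enat (k * Suc q)"
    if "\<omega> \<in> space M" "Q \<le> q" "\<omega> \<notin> B q" for \<omega> q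
    using good_round_stops[OF k2 fin ppos psum PX L0 fLU eps delta al0 al1 mu0 mu sig _ suff]
      that Q1 unfolding B_def by auto
  note tail = nn_integral_le_geometric_tail[OF prob_space_axioms _ bad(1) Bmeas _ exp_gt_zero]
  have k0: "k > 0" and K0: "0 \<le> ?K" and \<rho>1: "?\<rho> < 1" using k2 pm0 by auto
  show "ETI M W eps f Xs p \<beta> \<sigma>2 \<alpha> \<delta> k \<le> ennreal bound"
    unfolding ETI_def bound_def using tail[OF k0 K0 \<rho>1] stops by (simp add: mult.assoc)
  show "ETII M W eps f Xs p \<beta> \<sigma>2 \<alpha> \<delta> k \<le> ennreal bound"
    unfolding ETII_def bound_def using tail[OF k0 K0 \<rho>1] stops by (simp add: mult.assoc)
qed

lemma expected_stopping_times_le_threshold: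
  fixes f :: "'c \<Rightarrow> real^'d" and W :: "nat \<Rightarrow> 'm \<Rightarrow> 'c \<times> real"
  assumes k2: "k \<ge> 2" and fin: "finite Xs" and ppos: "\<forall>x\<in>Xs. p x > 0" and psum: "(\<Sum>x\<in>Xs. p x) = 1"
    and PX: "set_pmf Ps \<subseteq> Xs"
    and L0: "0 < L" and LU: "L \<le> U" and fLU: "\<forall>x\<in>Xs. L \<le> (norm (f x))\<^sup>2 \<and> (norm (f x))\<^sup>2 \<le> U"
    and eps: "eps > 0" and delta: "\<delta> > 0" and al0: "0 < \<alpha>" and al1: "\<alpha> < 1"
    and mu0: "\<mu> > 0" and mu: "\<forall>v. \<mu> * (norm v)\<^sup>2 \<le> v \<bullet> (measure_pmf.expectation Ps (\<lambda>x. outer (f x)) *v v)"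
    and sig: "\<forall>a<k. 0 < \<sigma>2 a \<and> \<sigma>2 a \<le> \<sigma>M"
    and pmin: "\<forall>x0\<in>set_pmf Ps. pm \<le> pmf Ps x0" and pm0: "0 < pm" and pm1: "pm \<le> 1"
    and iid: "iid_model M Ps W" and Q1: "1 \<le> Q"
  defines "A \<equiv> 4 + 64 * \<sigma>M * U / (\<delta>\<^sup>2 * (\<mu> / 2))"
    and "B \<equiv> 2 * ln (2 * U / (L * alphaII \<alpha> k (card Xs)))"
    and "bound \<equiv> real k * real (Suc Q)
      + real k * (real k * (2 * real (card (set_pmf Ps)) + 1)) * exp (- pm / 10) ^ Q / (1 - exp (- pm / 10))"
  assumes QT: "64 * A\<^sup>2 + 2 * A * B + 1 + 2 * real CARD('d) + 6 * U / \<mu> \<le> real Q"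
  shows "ETI M W eps f Xs p \<beta> \<sigma>2 \<alpha> \<delta> k \<le> ennreal bound"
    and "ETII M W eps f Xs p \<beta> \<sigma>2 \<alpha> \<delta> k \<le> ennreal bound"
proof -
  have m1: "card Xs \<ge> 1" using fin psum by (metis card_0_eq less_one not_less sum.empty zero_neq_one)
  have sM: "0 \<le> \<sigma>M" using sig k2 by force
  have suff: "round_suffices CARD('d) L U (\<mu> / 2) \<sigma>M \<delta> (alphaII \<alpha> k (card Xs)) (Suc q)" if "Q \<le> q" for q
    using round_suffices_if_large[OF L0 LU mu0 delta sM alphaII_pos[OF al0 k2 m1] alphaII_le_1[OF al1 k2 m1]]
      QT that unfolding A_def B_def by simp
  note ET = expected_stopping_times_le[OF k2 fin ppos psum PX L0 fLU eps delta al0 al1 mu0 mu sig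
      pmin pm0 pm1 iid Q1 suff]
  show "ETI M W eps f Xs p \<beta> \<sigma>2 \<alpha> \<delta> k \<le> ennreal bound" using ET(1) unfolding bound_def .
  show "ETII M W eps f Xs p \<beta> \<sigma>2 \<alpha> \<delta> k \<le> ennreal bound" using ET(2) unfolding bound_def .
qed

lemma expected_stopping_times_le_log:
  fixes f :: "'c \<Rightarrow> real^'d" and W :: "nat \<Rightarrow> 'm \<Rightarrow> 'c \<times> real" and n :: nat
  assumes k2: "k \<ge> 2" and fin: "finite Xs" and ppos: "\<forall>x\<in>Xs. p x > 0" and psum: "(\<Sum>x\<in>Xs. p x) = 1"
    and PX: "set_pmf Ps \<subseteq> Xs"
    and L0: "0 < L" and LU: "L \<le> U" and fLU: "\<forall>x\<in>Xs. L \<le> (norm (f x))\<^sup>2 \<and> (norm (f x))\<^sup>2 \<le> U"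
    and eps: "eps > 0" and delta: "\<delta> > 0" and al0: "0 < \<alpha>" and al1: "\<alpha> < 1"
    and mu0: "\<mu> > 0" and mu: "\<forall>v. \<mu> * (norm v)\<^sup>2 \<le> v \<bullet> (measure_pmf.expectation Ps (\<lambda>x. outer (f x)) *v v)"
    and sig: "\<forall>a<k. 0 < \<sigma>2 a \<and> \<sigma>2 a \<le> \<sigma>M"
    and pmin: "\<forall>x0\<in>set_pmf Ps. pm \<le> pmf Ps x0" and pm0: "0 < pm" and pm1: "pm \<le> 1"
    and iid: "iid_model M Ps W"
    and l1: "1 \<le> l" and b0: "0 \<le> b" and logB: "2 * ln (2 * U / (L * alphaII \<alpha> k (card Xs))) \<le> b + 2 * l"
  defines "A \<equiv> 4 + 64 * \<sigma>M * U / (\<delta>\<^sup>2 * (\<mu> / 2))"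
  defines "bound \<equiv> real k * (64 * A\<^sup>2 + 2 * A * b + 4 + 2 * real CARD('d) + 6 * U / \<mu> + 4 * A * l + real n)
      + real k * (real k * (2 * real (card (set_pmf Ps)) + 1)) * exp (- pm / 10) ^ n / (1 - exp (- pm / 10))"
  shows "ETI M W eps f Xs p \<beta> \<sigma>2 \<alpha> \<delta> k \<le> ennreal bound"
    and "ETII M W eps f Xs p \<beta> \<sigma>2 \<alpha> \<delta> k \<le> ennreal bound"
proof -
  let ?K = "real k * (2 * real (card (set_pmf Ps)) + 1)" and ?\<rho> = "exp (- pm / 10)"
  have A0: "0 \<le> A" unfolding A_def using sig k2 L0 LU delta mu0 by force
  define T where "T = 64 * A\<^sup>2 + 2 * A * (b + 2 * l) + 1 + 2 * real CARD('d) + 6 * U / \<mu>"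
  define Q where "Q = nat \<lceil>T\<rceil> + n + 1"
  have T0: "0 \<le> T" unfolding T_def using A0 b0 l1 L0 LU mu0 by simp
  have "2 * A * (2 * ln (2 * U / (L * alphaII \<alpha> k (card Xs)))) \<le> 2 * A * (b + 2 * l)"
    using logB A0 by (intro mult_left_mono) auto
  then have QT: "64 * A\<^sup>2 + 2 * A * (2 * ln (2 * U / (L * alphaII \<alpha> k (card Xs)))) + 1
      + 2 * real CARD('d) + 6 * U / \<mu> \<le> real Q"
    unfolding Q_def using T_def by linarith
  have "real (Suc Q) \<le> T + real n + 3" unfolding Q_def using T0 by linarith
  also have "\<dots> = 64 * A\<^sup>2 + 2 * A * b + 4 + 2 * real CARD('d) + 6 * U / \<mu> + 4 * A * l + real n"
    unfolding T_def by (simp add: algebra_simps)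
  finally have "real k * real (Suc Q) \<le> real k * (64 * A\<^sup>2 + 2 * A * b + 4 + 2 * real CARD('d) + 6 * U / \<mu> + 4 * A * l + real n)"
    by (rule mult_left_mono) simp
  moreover have "?\<rho> ^ Q \<le> ?\<rho> ^ n" unfolding Q_def using pm0 by (intro power_decreasing) auto
  then have "real k * ?K * ?\<rho> ^ Q / (1 - ?\<rho>) \<le> real k * ?K * ?\<rho> ^ n / (1 - ?\<rho>)"
    using pm0 by (intro divide_right_mono mult_left_mono) auto
  ultimately have "ennreal (real k * real (Suc Q) + real k * ?K * ?\<rho> ^ Q / (1 - ?\<rho>)) \<le> ennreal bound"
    unfolding bound_def by (intro ennreal_leI add_mono)
  moreover have "1 \<le> Q" unfolding Q_def by simp
  note ET = expected_stopping_times_le_threshold[OF k2 fin ppos psum PX L0 LU fLU eps delta al0 al1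
      mu0 mu sig pmin pm0 pm1 iid this QT[unfolded A_def]]
  ultimately show "ETI M W eps f Xs p \<beta> \<sigma>2 \<alpha> \<delta> k \<le> ennreal bound"
    and "ETII M W eps f Xs p \<beta> \<sigma>2 \<alpha> \<delta> k \<le> ennreal bound"
    using ET by (meson order_trans)+
qed

lemma expected_stopping_times_O_log_inv_alpha:
  fixes f :: "'c \<Rightarrow> real^'d"
  assumes fin: "finite Xs" and ppos: "\<forall>x\<in>Xs. p x > 0" and psum: "(\<Sum>x\<in>Xs. p x) = 1"
    and PX: "set_pmf Ps \<subseteq> Xs"
    and L0: "0 < L" and LU: "L \<le> U" and fLU: "\<forall>x\<in>Xs. L \<le> (norm (f x))\<^sup>2 \<and> (norm (f x))\<^sup>2 \<le> U"
    and eps: "eps > 0" and delta: "\<delta> > 0"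
    and mu0: "\<mu> > 0" and mu: "\<forall>v. \<mu> * (norm v)\<^sup>2 \<le> v \<bullet> (measure_pmf.expectation Ps (\<lambda>x. outer (f x)) *v v)"
    and pmin: "\<forall>x0\<in>set_pmf Ps. pm \<le> pmf Ps x0" and pm0: "0 < pm" and pm1: "pm \<le> 1"
    and k2: "k \<ge> 2" and sig0: "\<forall>a<k. 0 < \<sigma>2 a"
  shows "\<exists>C \<alpha>0. 0 < \<alpha>0 \<and> (\<forall>\<alpha>. 0 < \<alpha> \<and> \<alpha> \<le> \<alpha>0 \<longrightarrow>
          (\<forall>(M :: 'm measure) W. iid_model M Ps W \<longrightarrow>
             ETI M W eps f Xs p \<beta> \<sigma>2 \<alpha> \<delta> k \<le> ennreal (C * ln (1 / \<alpha>)) \<and>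
             ETII M W eps f Xs p \<beta> \<sigma>2 \<alpha> \<delta> k \<le> ennreal (C * ln (1 / \<alpha>))))"
proof -
  define \<sigma>M where "\<sigma>M = Max (\<sigma>2 ` {..<k})"
  have sig: "\<forall>a<k. 0 < \<sigma>2 a \<and> \<sigma>2 a \<le> \<sigma>M" unfolding \<sigma>M_def using sig0 by auto
  define A where "A = 4 + 64 * \<sigma>M * U / (\<delta>\<^sup>2 * (\<mu> / 2))"
  define b where "b = 2 * ln (2 * U * real (k - 1) * real (card Xs) / L)"
  define c where "c = 64 * A\<^sup>2 + 2 * A * b + 4 + 2 * real CARD('d) + 6 * U / \<mu>"
  define K where "K = real k * (real k * (2 * real (card (set_pmf Ps)) + 1)) / (1 - exp (- pm / 10))"
  have m1: "card Xs \<ge> 1" using fin psum by (metis card_0_eq less_one not_less sum.empty zero_neq_one)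
  have pos: "0 < 2 * U * real (k - 1) * real (card Xs) / L" using L0 LU k2 m1 by (simp del: of_nat_diff)
  have "1 * 1 \<le> (2 * real (k - 1)) * real (card Xs)" using k2 m1 by (intro mult_mono) auto
  then have "U * 1 \<le> U * (2 * real (k - 1) * real (card Xs))"
    using L0 LU by (intro mult_left_mono) (auto simp del: of_nat_diff)
  then have "L \<le> 2 * U * real (k - 1) * real (card Xs)" using LU by (simp add: mult_ac)
  then have "1 \<le> 2 * U * real (k - 1) * real (card Xs) / L" using L0 by (simp add: le_divide_eq del: of_nat_diff)
  then have b0: "0 \<le> b" unfolding b_def by (simp del: of_nat_diff)
  have c0: "0 \<le> c" and K0: "0 \<le> K"
    using sig k2 L0 LU delta mu0 pm0 b0 by (force simp: A_def c_def K_def)+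
  have bound: "ETI M W eps f Xs p \<beta> \<sigma>2 \<alpha> \<delta> k \<le> ennreal ((real k * c + 4 * real k * A + K) * ln (1 / \<alpha>)) \<and>
      ETII M W eps f Xs p \<beta> \<sigma>2 \<alpha> \<delta> k \<le> ennreal ((real k * c + 4 * real k * A + K) * ln (1 / \<alpha>))"
    if al: "0 < \<alpha>" "\<alpha> \<le> exp (-1)" and iid: "iid_model M Ps W" for \<alpha> and M :: "'m measure" and W
  proof -
    have al1: "\<alpha> < 1" using al exp_less_one_iff[of "-1"] by linarith
    have lna: "1 \<le> ln (1 / \<alpha>)" using al ln_mono[OF al(2) al(1)] by (simp add: ln_div)
    have "2 * U / (L * alphaII \<alpha> k (card Xs)) = 2 * U * real (k - 1) * real (card Xs) / L * (1 / \<alpha>)"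
      unfolding alphaII_def using L0 al by (simp add: field_simps del: of_nat_diff)
    then have "2 * ln (2 * U / (L * alphaII \<alpha> k (card Xs))) = b + 2 * ln (1 / \<alpha>)"
      unfolding b_def using ln_mult_pos[OF pos, of "1 / \<alpha>"] al by (simp del: of_nat_diff)
    note ET = expected_stopping_times_le_log[OF k2 fin ppos psum PX L0 LU fLU eps delta al(1) al1
        mu0 mu sig pmin pm0 pm1 iid lna b0 order_eq_refl[OF this], where n=0, folded A_def]
    have ETb: "ETI M W eps f Xs p \<beta> \<sigma>2 \<alpha> \<delta> k \<le> ennreal (real k * (c + 4 * A * ln (1 / \<alpha>)) + K)"
      "ETII M W eps f Xs p \<beta> \<sigma>2 \<alpha> \<delta> k \<le> ennreal (real k * (c + 4 * A * ln (1 / \<alpha>)) + K)"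
      using ET unfolding c_def K_def by simp_all
    have "real k * c * 1 + K * 1 \<le> real k * c * ln (1 / \<alpha>) + K * ln (1 / \<alpha>)"
      using c0 K0 lna by (intro add_mono mult_left_mono) auto
    then have "real k * (c + 4 * A * ln (1 / \<alpha>)) + K \<le> (real k * c + 4 * real k * A + K) * ln (1 / \<alpha>)"
      by (simp add: algebra_simps)
    then show ?thesis using ETb by (meson ennreal_leI order_trans)
  qed
  show ?thesis using bound by (intro exI[of _ "real k * c + 4 * real k * A + K"] exI[of _ "exp (-1)"]) auto
qed

lemma log_rounds_bound:
  fixes c A m pm :: real and k :: nat
  assumes k3: "3 \<le> k" and c0: "0 \<le> c" and m0: "0 \<le> m" and pm0: "0 < pm"
  defines "\<rho> \<equiv> exp (- pm / 10)" and "n \<equiv> nat \<lceil>20 * ln (real k) / pm\<rceil>"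
  shows "real k * (c + 4 * A * ln (real k) + real n) + real k * (real k * m) * \<rho> ^ n / (1 - \<rho>)
    \<le> (c + 1 + 4 * A + 20 / pm + m / (1 - \<rho>)) * real k * ln (real k)"
proof -
  have k0: "0 < real k" using k3 by simp
  have \<rho>: "0 < \<rho>" "\<rho> < 1" unfolding \<rho>_def using pm0 by auto
  have "ln 3 \<le> ln (real k)" using k3 by (intro ln_mono) auto
  then have lnk: "1 \<le> ln (real k)" using ln3_gt_1 by linarith
  have "0 \<le> 20 * ln (real k) / pm" using lnk pm0 by simp
  then have n: "20 * ln (real k) / pm \<le> real n" "real n \<le> 20 * ln (real k) / pm + 1"
    unfolding n_def by linarith+
  \<comment> \<open>The n extra rounds make \<rho>^n \<le> 1/k^2, which absorbs the union bound over the k actions.\<close>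
  have "exp (real n * (- pm / 10)) \<le> exp (- ln ((real k)\<^sup>2))"
    using n(1) pm0 k0 by (simp add: ln_realpow field_simps)
  then have "(real k)\<^sup>2 * \<rho> ^ n \<le> 1" using k0 unfolding \<rho>_def exp_of_nat_mult by (simp add: exp_minus field_simps)
  then have "real k * (real k * m) * \<rho> ^ n / (1 - \<rho>) \<le> m / (1 - \<rho>) * 1"
    using \<rho> m0 by (simp add: divide_right_mono mult_left_le power2_eq_square mult_ac)
  also have "\<dots> \<le> m / (1 - \<rho>) * (real k * ln (real k))"
    using \<rho> m0 mult_mono[of 1 "real k" 1 "ln (real k)"] k3 lnk by (intro mult_left_mono) auto
  finally have tail: "real k * (real k * m) * \<rho> ^ n / (1 - \<rho>) \<le> m / (1 - \<rho>) * (real k * ln (real k))" .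
  have "c + 4 * A * ln (real k) + real n \<le> (c + 1) * 1 + (4 * A + 20 / pm) * ln (real k)"
    using n(2) by (simp add: algebra_simps)
  also have "\<dots> \<le> (c + 1 + 4 * A + 20 / pm) * ln (real k)"
    using c0 lnk mult_left_mono[OF lnk, of "c + 1"] by (simp add: algebra_simps)
  finally have "real k * (c + 4 * A * ln (real k) + real n) \<le> real k * ((c + 1 + 4 * A + 20 / pm) * ln (real k))"
    by (rule mult_left_mono) simp
  with tail show ?thesis by (simp add: algebra_simps)
qed

lemma expected_stopping_times_O_k_log_k:
  fixes f :: "'c \<Rightarrow> real^'d"
  assumes fin: "finite Xs" and ppos: "\<forall>x\<in>Xs. p x > 0" and psum: "(\<Sum>x\<in>Xs. p x) = 1"
    and PX: "set_pmf Ps \<subseteq> Xs"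
    and L0: "0 < L" and LU: "L \<le> U" and fLU: "\<forall>x\<in>Xs. L \<le> (norm (f x))\<^sup>2 \<and> (norm (f x))\<^sup>2 \<le> U"
    and eps: "eps > 0" and delta: "\<delta> > 0"
    and mu0: "\<mu> > 0" and mu: "\<forall>v. \<mu> * (norm v)\<^sup>2 \<le> v \<bullet> (measure_pmf.expectation Ps (\<lambda>x. outer (f x)) *v v)"
    and pmin: "\<forall>x0\<in>set_pmf Ps. pm \<le> pmf Ps x0" and pm0: "0 < pm" and pm1: "pm \<le> 1"
    and al0: "0 < \<alpha>" and al1: "\<alpha> < 1" and sM: "0 < \<sigma>max"
  shows "\<exists>C K. \<forall>k\<ge>K. \<forall>(\<beta> :: nat \<Rightarrow> real^'d) (\<sigma>2 :: nat \<Rightarrow> real).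
          (\<forall>a<k. 0 < \<sigma>2 a \<and> \<sigma>2 a \<le> \<sigma>max) \<longrightarrow>
          (\<forall>(M :: 'm measure) W. iid_model M Ps W \<longrightarrow>
             ETI M W eps f Xs p \<beta> \<sigma>2 \<alpha> \<delta> k \<le> ennreal (C * real k * ln (real k)) \<and>
             ETII M W eps f Xs p \<beta> \<sigma>2 \<alpha> \<delta> k \<le> ennreal (C * real k * ln (real k)))"
proof -
  define A where "A = 4 + 64 * \<sigma>max * U / (\<delta>\<^sup>2 * (\<mu> / 2))"
  define b where "b = 2 * ln (2 * U * real (card Xs) / (L * \<alpha>))"
  define \<rho> where "\<rho> = exp (- pm / 10)"
  define c where "c = 64 * A\<^sup>2 + 2 * A * b + 4 + 2 * real CARD('d) + 6 * U / \<mu>"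
  define C where "C = c + 1 + 4 * A + 20 / pm + (2 * real (card (set_pmf Ps)) + 1) / (1 - \<rho>)"
  have m1: "card Xs \<ge> 1" using fin psum by (metis card_0_eq less_one not_less sum.empty zero_neq_one)
  have "L * \<alpha> \<le> U * 1" using LU al1 L0 al0 by (intro mult_mono) auto
  also have "\<dots> \<le> 2 * U * real (card Xs)" using m1 L0 LU by simp
  finally have b0: "0 \<le> b" unfolding b_def using L0 al0 by (simp add: le_divide_eq)
  have c0: "0 \<le> c" using sM L0 LU delta mu0 b0 by (force simp: A_def c_def)
  have bound: "ETI M W eps f Xs p \<beta> \<sigma>2 \<alpha> \<delta> k \<le> ennreal (C * real k * ln (real k)) \<and>
      ETII M W eps f Xs p \<beta> \<sigma>2 \<alpha> \<delta> k \<le> ennreal (C * real k * ln (real k))"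
    if k3: "3 \<le> k" and sig: "\<forall>a<k. 0 < \<sigma>2 a \<and> \<sigma>2 a \<le> \<sigma>max" and iid: "iid_model M Ps W"
    for k \<beta> \<sigma>2 and M :: "'m measure" and W
  proof -
    have k2: "k \<ge> 2" and k0: "0 < real k" using k3 by auto
    have "ln 3 \<le> ln (real k)" using k3 by (intro ln_mono) auto
    then have lnk: "1 \<le> ln (real k)" using ln3_gt_1 by linarith
    have "2 * ln (2 * U / (L * alphaII \<alpha> k (card Xs))) = 2 * ln (real (k - 1) * (2 * U * real (card Xs) / (L * \<alpha>)))"
      unfolding alphaII_def using L0 al0 by (simp add: field_simps)
    also have "\<dots> \<le> 2 * ln (real k * (2 * U * real (card Xs) / (L * \<alpha>)))"
      using k2 m1 L0 LU al0 by (intro mult_left_mono ln_mono mult_right_mono mult_pos_pos) auto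
    also have "\<dots> = b + 2 * ln (real k)"
      unfolding b_def using ln_mult_pos[of "real k" "2 * U * real (card Xs) / (L * \<alpha>)"] k0 m1 L0 LU al0
      by simp
    finally have logB: "2 * ln (2 * U / (L * alphaII \<alpha> k (card Xs))) \<le> b + 2 * ln (real k)" .
    define n where "n = nat \<lceil>20 * ln (real k) / pm\<rceil>"
    note ET = expected_stopping_times_le_log[OF k2 fin ppos psum PX L0 LU fLU eps delta al0 al1
        mu0 mu sig pmin pm0 pm1 iid lnk b0 logB, where n=n, folded A_def c_def \<rho>_def]
    have "0 \<le> 2 * real (card (set_pmf Ps)) + 1" by simp
    from log_rounds_bound[OF k3 c0 this pm0, of A, folded \<rho>_def n_def] show ?thesis
      using ET unfolding C_def c_def by (meson ennreal_leI order_trans)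
  qed
  show ?thesis using bound by (intro exI[of _ C] exI[of _ "3::nat"]) auto
qed

lemma pmf_lower_bound:
  assumes "finite (set_pmf Ps)"
  shows "\<exists>pm. 0 < pm \<and> pm \<le> 1 \<and> (\<forall>x\<in>set_pmf Ps. pm \<le> pmf Ps x)"
proof -
  define pm where "pm = Min (pmf Ps ` set_pmf Ps)"
  have ne: "set_pmf Ps \<noteq> {}" by (simp add: set_pmf_not_empty)
  have "pm \<in> pmf Ps ` set_pmf Ps" unfolding pm_def using assms ne by (intro Min_in) auto
  then have "0 < pm" "pm \<le> 1" by (auto simp: set_pmf_eq' pmf_le_1)
  moreover have "\<forall>x\<in>set_pmf Ps. pm \<le> pmf Ps x" unfolding pm_def using assms by auto
  ultimately show ?thesis by blast
qed

theorem theorem3: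
  fixes f :: "real^'d \<Rightarrow> real^'d" and Xs :: "(real^'d) set" and p :: "real^'d \<Rightarrow> real"
    and Ps :: "(real^'d) pmf" and eps \<delta> :: real
  assumes fin: "finite Xs" and ne: "Xs \<noteq> {}"
    and ppos: "\<forall>x\<in>Xs. p x > 0" and psum: "(\<Sum>x\<in>Xs. p x) = 1"
    and Ps_supp: "set_pmf Ps \<subseteq> Xs"
    and eps: "eps > 0" and delta: "\<delta> > 0"
    and A1: "posdef (measure_pmf.expectation Ps (\<lambda>x. outer (f x)))"
    and A2: "\<forall>x\<in>Xs. f x \<noteq> 0"
    and B: "\<exists>L U. 0 < L \<and> L \<le> U \<and> (\<forall>x\<in>Xs. L \<le> (norm (f x))\<^sup>2 \<and> (norm (f x))\<^sup>2 \<le> U)"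
  shows
    \<comment> \<open>as k \<rightarrow> \<infinity>: T_I, T_II = O(k log k), uniformly over the unknown parameters
        (means arbitrary, noise variances bounded by any fixed sigma_max)\<close>
    "(\<forall>\<alpha> \<sigma>max. 0 < \<alpha> \<and> \<alpha> < 1 \<and> 0 < \<sigma>max \<longrightarrow>
       (\<exists>C K. \<forall>k\<ge>K. \<forall>(\<beta> :: nat \<Rightarrow> real^'d) (\<sigma>2 :: nat \<Rightarrow> real).
          (\<forall>a<k. 0 < \<sigma>2 a \<and> \<sigma>2 a \<le> \<sigma>max) \<longrightarrow>
          (\<forall>(M :: 'm measure) W. iid_model M Ps W \<longrightarrow>
             ETI M W eps f Xs p \<beta> \<sigma>2 \<alpha> \<delta> k \<le> ennreal (C * real k * ln (real k)) \<and>
             ETII M W eps f Xs p \<beta> \<sigma>2 \<alpha> \<delta> k \<le> ennreal (C * real k * ln (real k)))))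
     \<and>
    \<comment> \<open>as alpha \<rightarrow> 0 (everything else fixed): T_I, T_II = O(log(1/alpha))\<close>
     (\<forall>k \<ge> 2. \<forall>(\<beta> :: nat \<Rightarrow> real^'d) (\<sigma>2 :: nat \<Rightarrow> real). (\<forall>a<k. 0 < \<sigma>2 a) \<longrightarrow>
       (\<exists>C \<alpha>0. 0 < \<alpha>0 \<and> (\<forall>\<alpha>. 0 < \<alpha> \<and> \<alpha> \<le> \<alpha>0 \<longrightarrow>
          (\<forall>(M :: 'm measure) W. iid_model M Ps W \<longrightarrow>
             ETI M W eps f Xs p \<beta> \<sigma>2 \<alpha> \<delta> k \<le> ennreal (C * ln (1 / \<alpha>)) \<and>
             ETII M W eps f Xs p \<beta> \<sigma>2 \<alpha> \<delta> k \<le> ennreal (C * ln (1 / \<alpha>))))))"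
proof -
  \<comment> \<open>ne and A2 are implied by psum and B respectively.\<close>
  obtain L U where L0: "0 < L" and LU: "L \<le> U"
    and fLU: "\<forall>x\<in>Xs. L \<le> (norm (f x))\<^sup>2 \<and> (norm (f x))\<^sup>2 \<le> U"
    using B by blast
  obtain \<mu> where mu0: "0 < \<mu>"
    and mu: "\<forall>v. \<mu> * (norm v)\<^sup>2 \<le> v \<bullet> (measure_pmf.expectation Ps (\<lambda>x. outer (f x)) *v v)"
    using posdef_imp_coercive[OF A1] by blast
  obtain pm where pm0: "0 < pm" and pm1: "pm \<le> 1" and pmin: "\<forall>x\<in>set_pmf Ps. pm \<le> pmf Ps x"
    using pmf_lower_bound[OF finite_subset[OF Ps_supp fin]] by blast
  note assms' = fin ppos psum Ps_supp L0 LU fLU eps delta mu0 mu pmin pm0 pm1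
  show ?thesis
    using expected_stopping_times_O_k_log_k[OF assms'] expected_stopping_times_O_log_inv_alpha[OF assms']
    by (intro conjI allI impI) auto
qed

end
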